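(* Let $p$ be prime and $H\le\mathrm{S}_n$ be in $\mathfrak{InP}(\mathrm{C}_p)$ with $|H|=p^s$, and let $B,K,\gamma,D$ be as in the context. Let $F=\mathrm{GL}_s(p)\times D$ act on the set $\mathrm{M}(s,k,p)$ of $s\times k$ matrices over $\mathbb{F}_p$ by $M^{(R,d)}=R^{-1}Md$. Let $\kappa\in K$ and let $M,M'\in\mathrm{M}(s,k,p)$ be generator matrices of $\gamma(H)$ and $\gamma(H^{\kappa^{-1}})$ respectively. Then there exists $b\in B$ with $b\kappa\in N_{\mathrm{S}_n}(H)$ if and only if there exists $f\in F$ with $M^f=M'$.
   Context: $H\le\mathrm{S}_{n}$, $n=pk$, has orbits $\Omega_1,\dots,\Omega_k$ of size $p$ with each $G_i:=H|_{\Omega_i}$ cyclic of order $p$ (regarded as a subgroup of $\mathrm{S}_n$); $G=G_1\times\dots\times G_k$; $x^g=g^{-1}xg$, so $H^{\kappa^{-1}}=\kappa H\kappa^{-1}$. For a bijection $\varphi:\Omega_1\to\Omega_j$ ($j\neq1$), $\overline\varphi$ is the involution in $\mathrm{Sym}(\Omega_1\cup\Omega_j)$ with $\alpha^{\overline\varphi}=\varphi(\alpha)$ for $\alpha\in\Omega_1$. For $2\le j\le k$, $\phi_j:\Omega_1\to\Omega_j$ witnesses a permutation isomorphism from $G_1$ to $G_j$. $B=\langle N_{\mathrm{Sym}(\Omega_i)}(G_i):1\le i\le k\rangle$, $K=\langle\overline{\phi_j}:2\le j\le k\rangle$. $g_1$ generates $G_1$, $g_j=g_1^{\overline{\phi_j}}$,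 and $\gamma:G\to\mathbb{F}_p^k$ is $\gamma(g_1^{r_1}\cdots g_k^{r_k})=(r_1,\dots,r_k)$. $D$ is the group of diagonal matrices in $\mathrm{GL}_k(p)$. A generator matrix of a code is a matrix whose rows form a basis of it. *)

theory Defs
  imports "Berlekamp_Zassenhaus.Finite_Field" "Jordan_Normal_Form.Matrix"
begin

(* Permutations are functions nat => nat; the paper's right action alpha^g is written g alpha,
   so the paper product g h (g first, then h) is the function h \<circ> g. *)

definition Sn :: "nat \<Rightarrow> (nat \<Rightarrow> nat) set" where
  "Sn n = {\<sigma>. \<sigma> permutes {1..n}}"

definition is_perm_subgroup :: "(nat \<Rightarrow> nat) set \<Rightarrow> (nat \<Rightarrow> nat) set \<Rightarrow> bool" where
  "is_perm_subgroup H S \<longleftrightarrow> H \<subseteq> S \<and> id \<in> H \<and> (\<forall>g\<in>H. \<forall>h\<in>H. g \<circ> h \<in> H) \<and> (\<forall>g\<in>H. inv_into UNIV g \<in> H)"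

inductive_set gen_perm :: "(nat \<Rightarrow> nat) set \<Rightarrow> (nat \<Rightarrow> nat) set" for S where
  gen_id: "id \<in> gen_perm S"
| gen_mult: "s \<in> S \<Longrightarrow> g \<in> gen_perm S \<Longrightarrow> s \<circ> g \<in> gen_perm S"
| gen_inv: "s \<in> S \<Longrightarrow> g \<in> gen_perm S \<Longrightarrow> inv_into UNIV s \<circ> g \<in> gen_perm S"

(* the paper's x^g = g^{-1} x g, as functions *)
definition conjp :: "(nat \<Rightarrow> nat) \<Rightarrow> (nat \<Rightarrow> nat) \<Rightarrow> (nat \<Rightarrow> nat)" where
  "conjp x g = g \<circ> x \<circ> inv_into UNIV g"

definition normaliser :: "(nat \<Rightarrow> nat) set \<Rightarrow> (nat \<Rightarrow> nat) set \<Rightarrow> (nat \<Rightarrow> nat) set" where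
  "normaliser S H = {\<sigma> \<in> S. (\<lambda>h. conjp h \<sigma>) ` H = H}"

definition restr :: "nat set \<Rightarrow> (nat \<Rightarrow> nat) \<Rightarrow> (nat \<Rightarrow> nat)" where
  "restr A h = (\<lambda>x. if x \<in> A then h x else x)"

definition cyclic_of_order :: "(nat \<Rightarrow> nat) set \<Rightarrow> nat \<Rightarrow> bool" where
  "cyclic_of_order G p \<longleftrightarrow> card G = p \<and> (\<exists>g\<in>G. G = range (\<lambda>m. g ^^ m))"

definition perm_iso_witness ::
  "nat set \<Rightarrow> nat set \<Rightarrow> (nat \<Rightarrow> nat) set \<Rightarrow> (nat \<Rightarrow> nat) set \<Rightarrow> (nat \<Rightarrow> nat) \<Rightarrow> bool" where
  "perm_iso_witness A B GA GB \<phi> \<longleftrightarrow> bij_betw \<phi> A B \<and>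
     (\<exists>\<psi>. bij_betw \<psi> GA GB \<and> (\<forall>g\<in>GA. \<forall>h\<in>GA. \<psi> (g \<circ> h) = \<psi> g \<circ> \<psi> h) \<and>
          (\<forall>g\<in>GA. \<forall>\<alpha>\<in>A. \<phi> (g \<alpha>) = (\<psi> g) (\<phi> \<alpha>)))"

definition ovl :: "nat set \<Rightarrow> nat set \<Rightarrow> (nat \<Rightarrow> nat) \<Rightarrow> (nat \<Rightarrow> nat)" where
  "ovl A B \<phi> = (\<lambda>x. if x \<in> A then \<phi> x else if x \<in> B then inv_into A \<phi> x else x)"

(* g_1^{r_1} ... g_k^{r_k}, the exponents taken as representatives in {0..p-1} *)
definition prod_pows :: "nat \<Rightarrow> (nat \<Rightarrow> nat \<Rightarrow> nat) \<Rightarrow> 'p::finite mod_ring vec \<Rightarrow> (nat \<Rightarrow> nat)" where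
  "prod_pows k gs r = foldr (\<lambda>i f. f \<circ> (gs i ^^ nat (to_int_mod_ring (r $ i)))) [0..<k] id"

definition gammap :: "nat \<Rightarrow> (nat \<Rightarrow> nat \<Rightarrow> nat) \<Rightarrow> (nat \<Rightarrow> nat) \<Rightarrow> 'p::finite mod_ring vec" where
  "gammap k gs g = (THE r. r \<in> carrier_vec k \<and> g = prod_pows k gs r)"

(* rows of M form a basis of V *)
definition generator_matrix :: "'a::field mat \<Rightarrow> nat \<Rightarrow> nat \<Rightarrow> 'a vec set \<Rightarrow> bool" where
  "generator_matrix M s k V \<longleftrightarrow> M \<in> carrier_mat s k \<and>
     {transpose_mat M *\<^sub>v c | c. c \<in> carrier_vec s} = V \<and>
     (\<forall>c \<in> carrier_vec s. transpose_mat M *\<^sub>v c = 0\<^sub>v k \<longrightarrow> c = 0\<^sub>v s)"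

definition GLmat :: "nat \<Rightarrow> 'a::field mat set" where
  "GLmat s = {R \<in> carrier_mat s s. invertible_mat R}"

definition Dmat :: "nat \<Rightarrow> 'a::field mat set" where
  "Dmat k = {d \<in> carrier_mat k k. diagonal_mat d \<and> (\<forall>i<k. d $$ (i,i) \<noteq> 0)}"

definition mat_inv :: "nat \<Rightarrow> 'a::field mat \<Rightarrow> 'a mat" where
  "mat_inv s R = (THE Ri. Ri \<in> carrier_mat s s \<and> R * Ri = 1\<^sub>m s \<and> Ri * R = 1\<^sub>m s)"

definition Fact :: "nat \<Rightarrow> 'a::field mat \<Rightarrow> 'a mat \<times> 'a mat \<Rightarrow> 'a mat" where
  "Fact s M f = mat_inv s (fst f) * M * snd f"

end

theory Submission
  imports Defs "Jordan_Normal_Form.Determinant"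
begin

text \<open>Coordinates with respect to the generators g_i identify G = G_1 \<times> ... \<times> G_k with
  \<bbbF>_p^k. Conjugation by an element of K permutes the coordinates, so H^(\<kappa>^-1) lies in G as
  well. An element b of B normalises each cyclic G_i, so it conjugates g_i to g_i^(c_i) with
  c_i \<noteq> 0 and acts on coordinates as the diagonal matrix diag(c_i); conversely every invertible
  diagonal matrix arises in this way, from the permutations g_i^t \<alpha> \<mapsto> g_i^(c_i t) \<alpha> of the
  orbits. Hence \<kappa>b normalises H iff H^b = H^(\<kappa>^-1) iff \<gamma>(H^(\<kappa>^-1)) = \<gamma>(H) d for some
  d \<in> D. Finally, two generator matrices with independent rows have the same row space iff they
  differ by a left factor in GL_s(p).\<close>

section \<open>Conjugation of permutations\<close>

lemma conjp_apply: "bij s \<Longrightarrow> conjp x s (s y) = s (x y)"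
  unfolding conjp_def by (simp add: bij_is_inj)

lemma conjp_eq_iff:
  assumes "bij s"
  shows "conjp x s = y \<longleftrightarrow> s \<circ> x = y \<circ> s"
proof
  assume "conjp x s = y"
  then show "s \<circ> x = y \<circ> s"
    using conjp_apply[OF assms] by auto
next
  assume comm: "s \<circ> x = y \<circ> s"
  show "conjp x s = y"
  proof
    fix z
    obtain w where "z = s w"
      using assms by (metis bij_pointE)
    then show "conjp x s z = y z"
      using comm conjp_apply[OF assms] by (metis comp_apply)
  qed
qed

lemma conjp_comp: "bij a \<Longrightarrow> bij b \<Longrightarrow> conjp x (a \<circ> b) = conjp (conjp x b) a"
  unfolding conjp_def by (simp add: o_inv_distrib comp_assoc)

lemma conjp_id_right: "conjp x id = x"
  by (simp add: conjp_def)

lemma conjp_inv_id: "conjp x (inv_into UNIV id) = x"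
  by (simp add: conjp_def)

lemma conjp_comp_left:
  assumes "bij s"
  shows "conjp (f \<circ> g) s = conjp f s \<circ> conjp g s"
proof -
  have "s \<circ> (f \<circ> g) = (conjp f s \<circ> conjp g s) \<circ> s"
    by (simp add: fun_eq_iff conjp_apply[OF assms])
  then show ?thesis
    using conjp_eq_iff[OF assms] by blast
qed

lemma conjp_id: "bij s \<Longrightarrow> conjp id s = id"
  by (simp add: conjp_eq_iff)

lemma conjp_funpow: "bij s \<Longrightarrow> conjp (f ^^ m) s = conjp f s ^^ m"
  by (induction m) (simp_all add: conjp_id conjp_comp_left)

lemma conjp_conjp_inv: "bij s \<Longrightarrow> conjp (conjp x s) (inv_into UNIV s) = x"
  by (simp add: conjp_eq_iff bij_imp_bij_inv fun_eq_iff conjp_def bij_is_inj inv_inv_eq)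

lemma conjp_inv_conjp: "bij s \<Longrightarrow> conjp (conjp x (inv_into UNIV s)) s = x"
  by (simp add: conjp_eq_iff bij_imp_bij_inv fun_eq_iff conjp_def bij_is_surj surj_f_inv_f inv_inv_eq)

lemma conjp_image_comp:
  "bij a \<Longrightarrow> bij b \<Longrightarrow> (\<lambda>h. conjp h (a \<circ> b)) ` X = (\<lambda>h. conjp h a) ` (\<lambda>h. conjp h b) ` X"
  by (simp add: conjp_comp image_image)

lemma conjp_commuting:
  "bij s \<Longrightarrow> s \<circ> x = x \<circ> s \<Longrightarrow> conjp x s = x"
  by (simp add: conjp_eq_iff)

lemma permutes_disjoint_commute:
  assumes "f permutes A" "g permutes B" "A \<inter> B = {}"
  shows "f \<circ> g = g \<circ> f"
proof
  fix x
  show "(f \<circ> g) x = (g \<circ> f) x"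
  proof (cases "x \<in> A")
    case True
    then have "f x \<in> A"
      by (simp add: permutes_in_image[OF assms(1)])
    with True assms(3) have "x \<notin> B" "f x \<notin> B"
      by auto
    then show ?thesis
      by (simp add: permutes_not_in[OF assms(2)])
  next
    case False
    have "g x \<notin> A"
    proof (cases "x \<in> B")
      case True
      then have "g x \<in> B"
        by (simp add: permutes_in_image[OF assms(2)])
      then show ?thesis
        using assms(3) by blast
    next
      case False
      then show ?thesis
        using \<open>x \<notin> A\<close> by (simp add: permutes_not_in[OF assms(2)])
    qed
    then show ?thesis
      using False by (simp add: permutes_not_in[OF assms(1)])
  qed
qed

lemma involution_permutes:
  assumes "\<And>x. f (f x) = x" "\<And>x. x \<notin> S \<Longrightarrow> f x = x"
  shows "f permutes S"
  unfolding permutes_def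
proof (intro conjI allI impI)
  fix y
  show "\<exists>!x. f x = y"
  proof (rule ex1I)
    show "f (f y) = y"
      by (rule assms(1))
    show "x = f y" if "f x = y" for x
      using that assms(1) by metis
  qed
qed (rule assms(2))

lemma gen_perm_comp: "g \<in> gen_perm S \<Longrightarrow> h \<in> gen_perm S \<Longrightarrow> g \<circ> h \<in> gen_perm S"
  by (induction g rule: gen_perm.induct) (simp_all add: comp_assoc gen_perm.intros)

lemma gen_perm_base: "s \<in> S \<Longrightarrow> s \<in> gen_perm S"
  using gen_perm.gen_mult[OF _ gen_perm.gen_id] by simp

lemma gen_perm_induct_inv_closed [consumes 1, case_names inv id step]:
  assumes "g \<in> gen_perm S" and "\<And>s. s \<in> S \<Longrightarrow> inv_into UNIV s \<in> S"
    and "P id" and "\<And>s g. s \<in> S \<Longrightarrow> P g \<Longrightarrow> P (s \<circ> g)"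
  shows "P g"
  using assms(1)
proof induction
  case gen_id
  show ?case
    by (rule assms(3))
next
  case (gen_mult s g)
  then show ?case
    using assms(4) by blast
next
  case (gen_inv s g)
  then show ?case
    using assms(2,4) by blast
qed

lemma inj_conjp: "bij s \<Longrightarrow> inj (\<lambda>g. conjp g s)"
  by (metis conjp_conjp_inv injI)

lemma conjp_image_eq_iff:
  assumes "bij s"
  shows "(\<lambda>h. conjp h s) ` Y = X \<longleftrightarrow> Y = (\<lambda>h. conjp h (inv_into UNIV s)) ` X"
proof
  assume "(\<lambda>h. conjp h s) ` Y = X"
  then show "Y = (\<lambda>h. conjp h (inv_into UNIV s)) ` X"
    using conjp_conjp_inv[OF assms] by (auto simp: image_image)
next
  assume "Y = (\<lambda>h. conjp h (inv_into UNIV s)) ` X"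
  then show "(\<lambda>h. conjp h s) ` Y = X"
    using conjp_inv_conjp[OF assms] by (auto simp: image_image)
qed

lemma normalises_comp_iff:
  assumes "bij a" "bij b"
  shows "(\<lambda>h. conjp h (a \<circ> b)) ` H = H \<longleftrightarrow>
    (\<lambda>h. conjp h b) ` H = (\<lambda>h. conjp h (inv_into UNIV a)) ` H"
  using conjp_image_comp[OF assms, of H] conjp_image_eq_iff[OF assms(1)] by simp

section \<open>Powers of a permutation\<close>

lemma funpow_cancel:
  assumes "bij g" "g ^^ a = g ^^ b" "a \<le> b"
  shows "g ^^ (b - a) = id"
proof -
  have "g ^^ a \<circ> g ^^ (b - a) = g ^^ a \<circ> id"
    using assms(2,3) by (metis funpow_add le_add_diff_inverse comp_id)
  moreover have "inj (g ^^ a)"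
    using assms(1) bij_is_inj inj_fn by blast
  ultimately show ?thesis
    by (simp add: fun_eq_iff inj_eq)
qed

lemma funpow_mod_period:
  assumes "g ^^ d = id"
  shows "g ^^ m = g ^^ (m mod d)"
proof
  fix x
  have "(g ^^ d) x = x"
    using assms by simp
  then show "(g ^^ m) x = (g ^^ (m mod d)) x"
    by (simp add: funpow_mod_eq)
qed

lemma funpow_period_exists:
  assumes "bij g" and "finite (range (\<lambda>m. g ^^ m))"
  shows "\<exists>d. 0 < d \<and> g ^^ d = id"
proof -
  have "\<not> inj (\<lambda>m. g ^^ m)"
    using assms(2) finite_imageD infinite_UNIV_nat by blast
  then obtain a b where ab: "g ^^ a = g ^^ b" "a \<noteq> b"
    unfolding inj_def by blast
  show ?thesis
  proof (cases "a < b")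
    case True
    then show ?thesis
      using funpow_cancel[OF assms(1) ab(1)] by (intro exI[of _ "b - a"]) simp
  next
    case False
    then show ?thesis
      using ab(2) funpow_cancel[OF assms(1) ab(1)[symmetric]] by (intro exI[of _ "a - b"]) simp
  qed
qed

lemma funpow_card_range_eq_id:
  assumes "bij g" and card: "card (range (\<lambda>m. g ^^ m)) = p" and "0 < p"
  shows "g ^^ p = id"
proof -
  have "finite (range (\<lambda>m. g ^^ m))"
  proof (rule ccontr)
    assume "infinite (range (\<lambda>m. g ^^ m))"
    then show False
      using card \<open>0 < p\<close> by simp
  qed
  then have ex: "\<exists>d. 0 < d \<and> g ^^ d = id"
    by (rule funpow_period_exists[OF assms(1)])
  define d where "d = (LEAST d. 0 < d \<and> g ^^ d = id)"
  have d: "0 < d" "g ^^ d = id"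
    using LeastI_ex[OF ex] unfolding d_def by simp_all
  have "range (\<lambda>m. g ^^ m) \<subseteq> (\<lambda>m. g ^^ m) ` {..<d}"
  proof
    fix f assume "f \<in> range (\<lambda>m. g ^^ m)"
    then obtain m where "f = g ^^ m"
      by blast
    then have "f = g ^^ (m mod d)"
      using funpow_mod_period[OF d(2), of m] by (rule trans)
    moreover have "m mod d < d"
      using d(1) by simp
    ultimately show "f \<in> (\<lambda>m. g ^^ m) ` {..<d}"
      by blast
  qed
  then have range_eq: "range (\<lambda>m. g ^^ m) = (\<lambda>m. g ^^ m) ` {..<d}"
    by blast
  have "inj_on (\<lambda>m. g ^^ m) {..<d}"
  proof (rule linorder_inj_onI')
    fix a b assume "a \<in> {..<d}" "b \<in> {..<d}" "a < b"
    then have "b - a < d"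
      by auto
    then have "\<not> (0 < b - a \<and> g ^^ (b - a) = id)"
      unfolding d_def by (rule not_less_Least)
    then show "g ^^ a \<noteq> g ^^ b"
      using funpow_cancel[OF assms(1), of a b] \<open>a < b\<close> by auto
  qed
  then have "card (range (\<lambda>m. g ^^ m)) = d"
    unfolding range_eq by (simp add: card_image)
  then show ?thesis
    using card d(2) by simp
qed

lemma hom_image_funpow_range:
  assumes hom: "\<forall>x\<in>range (\<lambda>m. g ^^ m). \<forall>y\<in>range (\<lambda>m. g ^^ m). \<psi> (x \<circ> y) = \<psi> x \<circ> \<psi> y"
    and "bij (\<psi> id)"
  shows "\<psi> ` range (\<lambda>m. g ^^ m) = range (\<lambda>m. \<psi> g ^^ m)"
proof -
  have pow_in: "g ^^ m \<in> range (\<lambda>m. g ^^ m)" for m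
    by (rule rangeI)
  have "\<psi> id \<circ> \<psi> id = \<psi> id"
    using bspec[OF bspec[OF hom pow_in[of 0]] pow_in[of 0]] by simp
  then have "\<psi> id (\<psi> id x) = \<psi> id x" for x
    by (metis comp_apply)
  then have "\<psi> id x = x" for x
    using bij_is_inj[OF assms(2)] by (meson injD)
  then have psi_id: "\<psi> id = id"
    by auto
  have g_in: "g \<in> range (\<lambda>m. g ^^ m)"
    using pow_in[of 1] by simp
  have pow: "\<psi> (g ^^ m) = \<psi> g ^^ m" for m
  proof (induction m)
    case (Suc m)
    have "\<psi> (g ^^ Suc m) = \<psi> (g \<circ> g ^^ m)"
      by (simp only: funpow.simps(2))
    also have "\<dots> = \<psi> g \<circ> \<psi> (g ^^ m)"
      using hom g_in pow_in[of m] by blast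
    also have "\<dots> = \<psi> g ^^ Suc m"
      by (simp only: Suc.IH funpow.simps(2))
    finally show ?case .
  qed (simp only: funpow.simps(1) psi_id)
  have "\<psi> ` range (\<lambda>m. g ^^ m) = range (\<lambda>m. \<psi> (g ^^ m))"
    by (simp add: image_image)
  then show ?thesis
    by (simp only: pow)
qed

text \<open>The powers used by \<open>prod_pows\<close>; they obey the exponent laws of the residue ring once
  \<open>g ^^ CARD('q) = id\<close>.\<close>

definition funpow_res :: "('a \<Rightarrow> 'a) \<Rightarrow> 'q::prime_card mod_ring \<Rightarrow> 'a \<Rightarrow> 'a" where
  "funpow_res g t = g ^^ nat (to_int_mod_ring t)"

lemma to_int_mod_ring_nonneg: "0 \<le> to_int_mod_ring (t :: 'q::finite mod_ring)"
  using range_to_int_mod_ring[where 'a = 'q] by (metis atLeastLessThan_iff rangeI)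

lemma of_nat_nat_to_int_mod_ring: "of_nat (nat (to_int_mod_ring t)) = (t :: 'q::prime_card mod_ring)"
  using to_int_mod_ring_nonneg[of t]
  by (simp add: of_nat_of_int_mod_ring of_int_mod_ring_to_int_mod_ring)

lemma to_int_mod_ring_of_nat:
  "to_int_mod_ring (of_nat m :: 'q::prime_card mod_ring) = int (m mod CARD('q))"
  by (unfold of_nat_of_int_mod_ring o_def, transfer) (simp add: zmod_int)

lemma funpow_res_of_nat:
  assumes "g ^^ CARD('q) = id"
  shows "funpow_res g (of_nat m :: 'q::prime_card mod_ring) = g ^^ m"
proof -
  have "funpow_res g (of_nat m :: 'q mod_ring) = g ^^ (m mod CARD('q))"
    by (simp add: funpow_res_def to_int_mod_ring_of_nat)
  also have "\<dots> = g ^^ m"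
    using funpow_mod_period[OF assms, of m] by (rule sym)
  finally show ?thesis .
qed

lemma funpow_res_0: "funpow_res g 0 = id"
  by (simp add: funpow_res_def)

lemma funpow_res_1: "funpow_res g 1 = g"
  by (simp add: funpow_res_def)

lemma funpow_res_add:
  assumes "g ^^ CARD('q) = id"
  shows "funpow_res g (s + t :: 'q::prime_card mod_ring) = funpow_res g s \<circ> funpow_res g t"
proof -
  have "funpow_res g s \<circ> funpow_res g t = g ^^ (nat (to_int_mod_ring s) + nat (to_int_mod_ring t))"
    by (simp add: funpow_res_def funpow_add)
  also have "\<dots> = funpow_res g (of_nat (nat (to_int_mod_ring s) + nat (to_int_mod_ring t)) :: 'q mod_ring)"
    by (rule funpow_res_of_nat[OF assms, symmetric])
  also have "\<dots> = funpow_res g (s + t)"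
    by (simp only: of_nat_add of_nat_nat_to_int_mod_ring)
  finally show ?thesis
    by simp
qed

lemma funpow_funpow_res:
  "g ^^ CARD('q) = id \<Longrightarrow> funpow_res g t ^^ m = funpow_res g (of_nat m * t :: 'q::prime_card mod_ring)"
  by (induction m) (simp_all add: funpow_res_0 funpow_res_add algebra_simps)

lemma funpow_res_funpow_res:
  assumes "g ^^ CARD('q) = id"
  shows "funpow_res (funpow_res g c) t = funpow_res g (c * t :: 'q::prime_card mod_ring)"
  using funpow_funpow_res[OF assms, of "nat (to_int_mod_ring t)" c]
  by (simp add: funpow_res_def[of "funpow_res g c"] of_nat_nat_to_int_mod_ring mult.commute)

lemma range_funpow_res:
  assumes "g ^^ CARD('q) = id"
  shows "range (funpow_res g :: 'q::prime_card mod_ring \<Rightarrow> _) = range (\<lambda>m. g ^^ m)"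
proof
  show "range (funpow_res g :: 'q mod_ring \<Rightarrow> _) \<subseteq> range (\<lambda>m. g ^^ m)"
    by (auto simp: funpow_res_def)
  show "range (\<lambda>m. g ^^ m) \<subseteq> range (funpow_res g :: 'q mod_ring \<Rightarrow> _)"
  proof
    fix f assume "f \<in> range (\<lambda>m. g ^^ m)"
    then obtain m where "f = g ^^ m"
      by blast
    then have "f = funpow_res g (of_nat m :: 'q mod_ring)"
      using funpow_res_of_nat[OF assms] by simp
    then show "f \<in> range (funpow_res g :: 'q mod_ring \<Rightarrow> _)"
      by blast
  qed
qed

lemma funpow_res_fixes: "g x = x \<Longrightarrow> funpow_res g t x = x"
proof -
  assume "g x = x"
  then have "(g ^^ m) x = x" for m
    by (induction m) simp_all
  then show ?thesis
    by (simp add: funpow_res_def)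
qed

text \<open>The witness maps g^t a to g^(c t) a.\<close>

lemma exists_intertwiner_on_regular_orbit:
  fixes g :: "'a \<Rightarrow> 'a" and c :: "'q::prime_card mod_ring"
  assumes period: "g ^^ CARD('q) = id"
    and orbit: "bij_betw (\<lambda>t :: 'q mod_ring. funpow_res g t a) UNIV A"
    and outside: "\<forall>x. x \<notin> A \<longrightarrow> g x = x" and "c \<noteq> 0"
  shows "\<exists>\<sigma>. \<sigma> permutes A \<and> \<sigma> \<circ> g = funpow_res g c \<circ> \<sigma>"
proof -
  let ?orb = "\<lambda>t :: 'q mod_ring. funpow_res g t a"
  define \<sigma> where "\<sigma> x = (if x \<in> A then ?orb (c * inv_into UNIV ?orb x) else x)" for x
  have \<sigma>_orb: "\<sigma> (?orb t) = ?orb (c * t)" for t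
  proof -
    have "inv_into UNIV ?orb (?orb t) = t"
      using bij_betw_inv_into_left[OF orbit, of t] by simp
    then show ?thesis
      using bij_betwE[OF orbit] by (simp add: \<sigma>_def)
  qed
  have "bij ((*) c)"
    by (rule o_bij[of "(*) (inverse c)"]) (use \<open>c \<noteq> 0\<close> in \<open>auto simp: fun_eq_iff\<close>)
  then have "bij_betw (?orb \<circ> ((*) c \<circ> inv_into UNIV ?orb)) A A"
    using bij_betw_trans[OF bij_betw_trans[OF bij_betw_inv_into[OF orbit]] orbit] by blast
  then have "bij_betw \<sigma> A A"
    by (rule bij_betw_cong[THEN iffD1, rotated]) (simp add: \<sigma>_def)
  then have perm: "\<sigma> permutes A"
    by (rule bij_imp_permutes) (simp add: \<sigma>_def)
  have "\<sigma> (g x) = funpow_res g c (\<sigma> x)" for x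
  proof (cases "x \<in> A")
    case True
    then obtain t where x: "x = ?orb t"
      using orbit by (metis bij_betw_imp_surj_on imageE)
    have "g x = ?orb (1 + t)"
      using x by (simp add: funpow_res_add[OF period] funpow_res_1)
    then have "\<sigma> (g x) = ?orb (c + c * t)"
      by (simp add: \<sigma>_orb distrib_left)
    also have "\<dots> = funpow_res g c (\<sigma> x)"
      using x by (simp add: \<sigma>_orb funpow_res_add[OF period])
    finally show ?thesis .
  next
    case False
    then show ?thesis
      using outside by (simp add: \<sigma>_def funpow_res_fixes)
  qed
  then show ?thesis
    using perm by (intro exI[of _ \<sigma>]) (simp add: fun_eq_iff)
qed

lemma conjp_funpow_res: "bij s \<Longrightarrow> conjp (funpow_res g t) s = funpow_res (conjp g s) t"
  by (simp add: funpow_res_def conjp_funpow)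

lemma foldr_comp_fixes: "(\<forall>i\<in>set xs. F i x = x) \<Longrightarrow> foldr (\<lambda>i f. f \<circ> F i) xs id x = x"
  by (induction xs) auto

lemma foldr_comp_apply:
  assumes "distinct xs" "i \<in> set xs" "x \<in> S" "F i x \<in> S"
    and "\<forall>j\<in>set xs. j \<noteq> i \<longrightarrow> (\<forall>y\<in>S. F j y = y)"
  shows "foldr (\<lambda>i f. f \<circ> F i) xs id x = F i x"
  using assms
proof (induction xs)
  case (Cons j xs)
  show ?case
  proof (cases "j = i")
    case True
    then have "\<forall>l\<in>set xs. F l (F j x) = F j x"
      using Cons.prems by auto
    then have "foldr (\<lambda>i f. f \<circ> F i) xs id (F i x) = F i x"
      using True by (intro foldr_comp_fixes) simp
    moreover have "foldr (\<lambda>i f. f \<circ> F i) (j # xs) id x = foldr (\<lambda>i f. f \<circ> F i) xs id (F i x)"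
      using True by simp
    ultimately show ?thesis
      by (rule trans[rotated])
  next
    case False
    then show ?thesis
      using Cons by simp
  qed
qed simp

section \<open>Row spaces of generator matrices\<close>

definition diag_scale :: "nat \<Rightarrow> (nat \<Rightarrow> 'a::times) \<Rightarrow> 'a vec \<Rightarrow> 'a vec" where
  "diag_scale k d v = vec k (\<lambda>i. v $ i * d i)"

lemma diag_scale_carrier [simp]: "diag_scale k d v \<in> carrier_vec k"
  by (simp add: diag_scale_def)

definition row_space :: "'a::field mat \<Rightarrow> 'a vec set" where
  "row_space N = (\<lambda>c. transpose_mat N *\<^sub>v c) ` carrier_vec (dim_row N)"

definition rows_independent :: "'a::field mat \<Rightarrow> bool" where
  "rows_independent N \<longleftrightarrow>
    (\<forall>c\<in>carrier_vec (dim_row N). transpose_mat N *\<^sub>v c = 0\<^sub>v (dim_col N) \<longrightarrow> c = 0\<^sub>v (dim_row N))"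

lemma rows_independentD:
  assumes "rows_independent N" "N \<in> carrier_mat s k"
    and "c \<in> carrier_vec s" "transpose_mat N *\<^sub>v c = 0\<^sub>v k"
  shows "c = 0\<^sub>v s"
proof -
  have "dim_row N = s" "dim_col N = k"
    using assms(2) by auto
  then show ?thesis
    using assms(1,3,4) unfolding rows_independent_def by blast
qed

lemma generator_matrix_iff:
  "generator_matrix M s k V \<longleftrightarrow> M \<in> carrier_mat s k \<and> row_space M = V \<and> rows_independent M"
  unfolding generator_matrix_def row_space_def rows_independent_def Setcompr_eq_image by auto

lemma diag_scale_cong: "(\<And>i. i < k \<Longrightarrow> d i = d' i) \<Longrightarrow> diag_scale k d = diag_scale k d'"
  by (auto simp: diag_scale_def fun_eq_iff intro!: eq_vecI)

lemma transpose_mult_mult_vec: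
  fixes A N :: "'a::field mat"
  assumes "A \<in> carrier_mat s s'" "N \<in> carrier_mat s' k" "c \<in> carrier_vec s"
  shows "transpose_mat (A * N) *\<^sub>v c = transpose_mat N *\<^sub>v (transpose_mat A *\<^sub>v c)"
  unfolding transpose_mult[OF assms(1,2)]
  using assms by (intro assoc_mult_mat_vec[of _ k s' _ s]) auto

lemma transpose_mult_unit_vec:
  fixes N :: "'a::field mat"
  assumes N: "N \<in> carrier_mat s k" and i: "i < s"
  shows "transpose_mat N *\<^sub>v unit_vec s i = row N i"
proof (rule eq_vecI)
  fix j assume "j < dim_vec (row N i)"
  then have j: "j < k"
    using N by simp
  have "(transpose_mat N *\<^sub>v unit_vec s i) $ j = col N j \<bullet> unit_vec s i"
    using N j by simp
  also have "\<dots> = N $$ (i, j)"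
    using scalar_prod_right_unit[OF i] N i j by simp
  finally show "(transpose_mat N *\<^sub>v unit_vec s i) $ j = row N i $ j"
    using N i j by simp
qed (use N in simp)

lemma transpose_mult_row:
  fixes N X :: "'a::field mat"
  assumes N: "N \<in> carrier_mat s k" and X: "X \<in> carrier_mat s' s" and i: "i < s'"
  shows "transpose_mat N *\<^sub>v row X i = row (X * N) i"
proof (rule eq_vecI)
  fix j assume "j < dim_vec (row (X * N) i)"
  then have j: "j < k"
    using N by simp
  have "(transpose_mat N *\<^sub>v row X i) $ j = col N j \<bullet> row X i"
    using N j by simp
  also have "\<dots> = row X i \<bullet> col N j"
    by (rule comm_scalar_prod[of _ s]) (use N X in \<open>auto simp: col_def row_def\<close>)
  finally show "(transpose_mat N *\<^sub>v row X i) $ j = row (X * N) i $ j"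
    using N X i j by simp
qed (use N X in simp)

lemma row_space_mult_subset:
  fixes N :: "'a::field mat"
  assumes A: "A \<in> carrier_mat s s" and N: "N \<in> carrier_mat s k"
  shows "row_space (A * N) \<subseteq> row_space N"
proof
  fix v assume "v \<in> row_space (A * N)"
  then obtain c where c: "c \<in> carrier_vec s" "v = transpose_mat (A * N) *\<^sub>v c"
    using A by (auto simp: row_space_def)
  then have "v = transpose_mat N *\<^sub>v (transpose_mat A *\<^sub>v c)"
    using transpose_mult_mult_vec[OF A N] by simp
  moreover have "transpose_mat A *\<^sub>v c \<in> carrier_vec (dim_row N)"
    using A N c by simp
  ultimately show "v \<in> row_space N"
    by (auto simp: row_space_def)
qed

lemma row_space_mult_invertible:
  fixes N :: "'a::field mat"
  assumes A: "A \<in> carrier_mat s s" and B: "B \<in> carrier_mat s s" and BA: "B * A = 1\<^sub>m s"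
    and N: "N \<in> carrier_mat s k"
  shows "row_space (A * N) = row_space N"
proof
  have AN: "A * N \<in> carrier_mat s k"
    using A N by simp
  have "B * (A * N) = N"
    using A B N BA by (simp add: assoc_mult_mat[symmetric])
  then show "row_space N \<subseteq> row_space (A * N)"
    using row_space_mult_subset[OF B AN] by simp
qed (rule row_space_mult_subset[OF A N])

lemma transpose_mult_diag_vec:
  fixes N d :: "'a::field mat"
  assumes N: "N \<in> carrier_mat s k" and d: "d \<in> carrier_mat k k" "diagonal_mat d"
    and c: "c \<in> carrier_vec s"
  shows "transpose_mat (N * d) *\<^sub>v c = diag_scale k (\<lambda>j. d $$ (j, j)) (transpose_mat N *\<^sub>v c)"
proof (rule eq_vecI)
  fix j assume "j < dim_vec (diag_scale k (\<lambda>j. d $$ (j, j)) (transpose_mat N *\<^sub>v c))"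
  then have j: "j < k"
    by (simp add: diag_scale_def)
  have col_d: "col d j = d $$ (j, j) \<cdot>\<^sub>v unit_vec k j"
    using d j unfolding diagonal_mat_def by (intro eq_vecI) (auto simp: unit_vec_def)
  have col_N: "N *\<^sub>v unit_vec k j = col N j"
    using N j by (intro eq_vecI) auto
  have "(transpose_mat (N * d) *\<^sub>v c) $ j = (N *\<^sub>v col d j) \<bullet> c"
    using N d j by simp
  also have "\<dots> = (d $$ (j, j) \<cdot>\<^sub>v col N j) \<bullet> c"
    using col_d col_N mult_mat_vec[OF N, of "unit_vec k j" "d $$ (j, j)"] by simp
  also have "\<dots> = (transpose_mat N *\<^sub>v c) $ j * d $$ (j, j)"
    using N c j by simp
  finally show "(transpose_mat (N * d) *\<^sub>v c) $ j = diag_scale k (\<lambda>j. d $$ (j, j)) (transpose_mat N *\<^sub>v c) $ j"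
    using j by (simp add: diag_scale_def)
qed (use N d in \<open>simp add: diag_scale_def\<close>)

lemma row_space_mult_diag:
  fixes N d :: "'a::field mat"
  assumes N: "N \<in> carrier_mat s k" and d: "d \<in> carrier_mat k k" "diagonal_mat d"
  shows "row_space (N * d) = diag_scale k (\<lambda>j. d $$ (j, j)) ` row_space N"
proof -
  have "row_space (N * d) = (\<lambda>c. diag_scale k (\<lambda>j. d $$ (j, j)) (transpose_mat N *\<^sub>v c)) ` carrier_vec s"
    unfolding row_space_def using N by (intro image_cong) (simp_all add: transpose_mult_diag_vec[OF N d])
  then show ?thesis
    using N by (simp add: row_space_def image_image)
qed

lemma rows_independent_mult_diag:
  fixes N :: "'a::field mat"
  assumes N: "N \<in> carrier_mat s k" and d: "d \<in> carrier_mat k k" "diagonal_mat d"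
    and nz: "\<forall>i<k. d $$ (i, i) \<noteq> 0" and ind: "rows_independent N"
  shows "rows_independent (N * d)"
  unfolding rows_independent_def
proof (intro ballI impI)
  fix c assume c: "c \<in> carrier_vec (dim_row (N * d))"
    and z: "transpose_mat (N * d) *\<^sub>v c = 0\<^sub>v (dim_col (N * d))"
  have c': "c \<in> carrier_vec s"
    using c N by simp
  have "transpose_mat N *\<^sub>v c = 0\<^sub>v k"
  proof (rule eq_vecI)
    fix i assume "i < dim_vec (0\<^sub>v k :: 'a vec)"
    then have i: "i < k"
      by simp
    have "(transpose_mat N *\<^sub>v c) $ i * d $$ (i, i) = 0"
      using arg_cong[OF z, of "\<lambda>v. v $ i"] transpose_mult_diag_vec[OF N d c'] N d i
      by (simp add: diag_scale_def)
    then show "(transpose_mat N *\<^sub>v c) $ i = 0\<^sub>v k $ i"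
      using nz i by simp
  qed (use N in simp)
  then have "c = 0\<^sub>v s"
    by (rule rows_independentD[OF ind N c'])
  then show "c = 0\<^sub>v (dim_row (N * d))"
    using N by simp
qed

lemma row_in_row_space:
  fixes N :: "'a::field mat"
  assumes N: "N \<in> carrier_mat s k" and i: "i < s"
  shows "row N i \<in> row_space N"
  unfolding row_space_def
  by (rule image_eqI[where x = "unit_vec s i"]) (use transpose_mult_unit_vec[OF N i] N in simp_all)

lemma row_space_subset_factor:
  fixes N :: "'a::field mat"
  assumes N: "N \<in> carrier_mat s k" and M: "M \<in> carrier_mat s k"
    and sub: "row_space N \<subseteq> row_space M"
  shows "\<exists>P\<in>carrier_mat s s. N = P * M"
proof -
  have "\<exists>c. c \<in> carrier_vec s \<and> transpose_mat M *\<^sub>v c = row N i" if i: "i < s" for i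
  proof -
    have "row N i \<in> row_space N"
      by (rule row_in_row_space[OF N i])
    then have "row N i \<in> row_space M"
      using sub by blast
    then obtain c where "c \<in> carrier_vec (dim_row M)" "row N i = transpose_mat M *\<^sub>v c"
      unfolding row_space_def by blast
    then show ?thesis
      using M by auto
  qed
  then have "\<forall>i\<in>{..<s}. \<exists>c. c \<in> carrier_vec s \<and> transpose_mat M *\<^sub>v c = row N i"
    by blast
  from bchoice[OF this] obtain cs
    where cs: "\<forall>i\<in>{..<s}. cs i \<in> carrier_vec s \<and> transpose_mat M *\<^sub>v cs i = row N i"
    by blast
  define P where "P = mat s s (\<lambda>(i, j). cs i $ j)"
  have P: "P \<in> carrier_mat s s"
    by (simp add: P_def)
  have "N = P * M"
  proof (rule eq_matI)
    fix i j assume "i < dim_row (P * M)" "j < dim_col (P * M)"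
    then have i: "i < s" and j: "j < k"
      using P M by auto
    have cs_i: "cs i \<in> carrier_vec s" "transpose_mat M *\<^sub>v cs i = row N i"
      using cs i by simp_all
    have "row P i = cs i"
      using cs_i(1) i by (intro eq_vecI) (auto simp: P_def)
    then have "row (P * M) i = row N i"
      using transpose_mult_row[OF M P i] cs_i(2) by simp
    then have "row (P * M) i $ j = row N i $ j"
      by simp
    then show "N $$ (i, j) = (P * M) $$ (i, j)"
      using N M P i j by simp
  qed (use N M P in auto)
  then show ?thesis
    using P by blast
qed

lemma rows_independent_left_cancel:
  fixes N :: "'a::field mat"
  assumes N: "N \<in> carrier_mat s k" and ind: "rows_independent N"
    and X: "X \<in> carrier_mat s s" and XN: "X * N = N"
  shows "X = 1\<^sub>m s"
proof (rule eq_matI)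
  fix i j assume "i < dim_row (1\<^sub>m s :: 'a mat)" "j < dim_col (1\<^sub>m s :: 'a mat)"
  then have i: "i < s" and j: "j < s"
    by auto
  have rX: "row X i \<in> carrier_vec s"
    using row_carrier[of X i] X by simp
  have "transpose_mat N *\<^sub>v (row X i - unit_vec s i) =
      transpose_mat N *\<^sub>v row X i - transpose_mat N *\<^sub>v unit_vec s i"
    using N rX by (intro mult_minus_distrib_mat_vec) auto
  also have "\<dots> = 0\<^sub>v k"
    using transpose_mult_row[OF N X i] transpose_mult_unit_vec[OF N i] XN row_carrier[of N i]
      carrier_matD[OF N] by simp
  finally have "transpose_mat N *\<^sub>v (row X i - unit_vec s i) = 0\<^sub>v k" .
  then have "row X i - unit_vec s i = 0\<^sub>v s"
    using rows_independentD[OF ind N] rX by simp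
  then have "(row X i - unit_vec s i) $ j = 0"
    using j by simp
  then have "row X i $ j = unit_vec s i $ j"
    using j by simp
  then show "X $$ (i, j) = 1\<^sub>m s $$ (i, j)"
    using X i j by simp
qed (use X in auto)

lemma same_row_space_invertible_factor:
  fixes N :: "'a::field mat"
  assumes N: "N \<in> carrier_mat s k" and M: "M \<in> carrier_mat s k"
    and ind: "rows_independent N" and eq: "row_space N = row_space M"
  shows "\<exists>P Q. P \<in> carrier_mat s s \<and> Q \<in> carrier_mat s s \<and> P * Q = 1\<^sub>m s \<and> Q * P = 1\<^sub>m s \<and> M = Q * N"
proof -
  obtain P where P: "P \<in> carrier_mat s s" and NP: "N = P * M"
    using row_space_subset_factor[OF N M] eq by blast
  obtain Q where Q: "Q \<in> carrier_mat s s" and MQ: "M = Q * N"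
    using row_space_subset_factor[OF M N] eq by blast
  have "(P * Q) * N = P * (Q * N)"
    using P Q N by (rule assoc_mult_mat)
  also have "\<dots> = P * M"
    by (simp only: MQ)
  also have "\<dots> = N"
    by (simp only: NP)
  finally have "(P * Q) * N = N" .
  then have PQ: "P * Q = 1\<^sub>m s"
    using rows_independent_left_cancel[OF N ind] P Q by simp
  then have "Q * P = 1\<^sub>m s"
    by (rule mat_mult_left_right_inverse[OF P Q])
  then show ?thesis
    using P Q PQ MQ by blast
qed

lemma mat_inv_eq:
  fixes R B :: "'a::field mat"
  assumes R: "R \<in> carrier_mat s s" and B: "B \<in> carrier_mat s s"
    and RB: "R * B = 1\<^sub>m s" and BR: "B * R = 1\<^sub>m s"
  shows "mat_inv s R = B"
  unfolding mat_inv_def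
proof (rule the_equality)
  fix Ri assume Ri: "Ri \<in> carrier_mat s s \<and> R * Ri = 1\<^sub>m s \<and> Ri * R = 1\<^sub>m s"
  have "Ri = Ri * (R * B)"
    using RB Ri right_mult_one_mat[of Ri s s] by simp
  also have "\<dots> = (Ri * R) * B"
    using Ri R B by (intro assoc_mult_mat[symmetric]) auto
  also have "\<dots> = B"
    using Ri B by simp
  finally show "Ri = B" .
qed (use B RB BR in simp)

lemma invertible_mat_inverse:
  fixes R :: "'a::field mat"
  assumes R: "R \<in> carrier_mat s s" and "invertible_mat R"
  obtains B where "B \<in> carrier_mat s s" "R * B = 1\<^sub>m s" "B * R = 1\<^sub>m s"
proof -
  obtain B where RB: "R * B = 1\<^sub>m (dim_row R)" and BR: "B * R = 1\<^sub>m (dim_row B)"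
    using assms(2) unfolding invertible_mat_def inverts_mat_def by blast
  have "dim_col B = s"
    using arg_cong[OF RB, of dim_col] R by simp
  moreover have "dim_row B = s"
    using arg_cong[OF BR, of dim_col] R by simp
  ultimately have "B \<in> carrier_mat s s"
    by (intro carrier_matI)
  then show ?thesis
    using RB BR R by (intro that[of B]) auto
qed

lemma row_space_Fact:
  fixes M :: "'a::field mat"
  assumes M: "M \<in> carrier_mat s k" and R: "R \<in> GLmat s" and d: "d \<in> Dmat k"
  shows "row_space (Fact s M (R, d)) = diag_scale k (\<lambda>i. d $$ (i, i)) ` row_space M"
proof -
  have Rc: "R \<in> carrier_mat s s" and "invertible_mat R"
    using R by (simp_all add: GLmat_def)
  then obtain B where B: "B \<in> carrier_mat s s" "R * B = 1\<^sub>m s" "B * R = 1\<^sub>m s"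
    by (rule invertible_mat_inverse)
  have dc: "d \<in> carrier_mat k k" "diagonal_mat d"
    using d by (auto simp: Dmat_def)
  have "Fact s M (R, d) = B * (M * d)"
    using mat_inv_eq[OF Rc B] M B(1) dc(1) by (simp add: Fact_def assoc_mult_mat)
  moreover have "row_space (B * (M * d)) = row_space (M * d)"
    by (rule row_space_mult_invertible[OF B(1) Rc B(2), where k = k]) (use M dc(1) in simp)
  ultimately show ?thesis
    using row_space_mult_diag[OF M dc] by simp
qed

lemma Fact_of_scaled_row_space:
  fixes M M' :: "'a::field mat"
  assumes M: "M \<in> carrier_mat s k" "rows_independent M" and M': "M' \<in> carrier_mat s k"
    and dd: "\<forall>i<k. dd i \<noteq> 0" and V': "row_space M' = diag_scale k dd ` row_space M"
  shows "\<exists>f \<in> GLmat s \<times> Dmat k. Fact s M f = M'"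
proof -
  define d where "d = mat k k (\<lambda>(i, j). if i = j then dd i else 0)"
  have dc: "d \<in> carrier_mat k k" "diagonal_mat d" "\<forall>i<k. d $$ (i, i) = dd i"
    by (simp_all add: d_def diagonal_mat_def)
  then have dD: "d \<in> Dmat k"
    using dd by (simp add: Dmat_def)
  have "row_space (M * d) = row_space M'"
    using row_space_mult_diag[OF M(1) dc(1,2)] diag_scale_cong[of k "\<lambda>i. d $$ (i, i)" dd] dc(3) V'
    by simp
  moreover have "rows_independent (M * d)"
    using rows_independent_mult_diag[OF M(1) dc(1,2) _ M(2)] dc(3) dd by simp
  moreover have "M * d \<in> carrier_mat s k"
    using M(1) dc(1) by simp
  ultimately obtain P Q where PQ: "P \<in> carrier_mat s s" "Q \<in> carrier_mat s s" "P * Q = 1\<^sub>m s"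
      "Q * P = 1\<^sub>m s" "M' = Q * (M * d)"
    using same_row_space_invertible_factor[OF _ M'] by blast
  have "invertible_mat P"
    unfolding invertible_mat_def inverts_mat_def using PQ by (intro conjI exI[of _ Q]) auto
  then have "P \<in> GLmat s"
    using PQ(1) by (simp add: GLmat_def)
  moreover have "Fact s M (P, d) = M'"
    using PQ mat_inv_eq[OF PQ(1-4)] M(1) dc(1) by (simp add: Fact_def assoc_mult_mat)
  ultimately show ?thesis
    using dD by blast
qed

lemma Fact_eq_iff_diag_scaled:
  fixes M M' :: "'a::field mat"
  assumes gM: "generator_matrix M s k V" and gM': "generator_matrix M' s k V'"
  shows "(\<exists>f \<in> GLmat s \<times> Dmat k. Fact s M f = M') \<longleftrightarrow>
    (\<exists>d. (\<forall>i<k. d i \<noteq> 0) \<and> V' = diag_scale k d ` V)"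
proof -
  have M: "M \<in> carrier_mat s k" "rows_independent M" "row_space M = V"
    and M': "M' \<in> carrier_mat s k" "row_space M' = V'"
    using gM gM' by (simp_all add: generator_matrix_iff)
  show ?thesis
  proof
    assume "\<exists>f \<in> GLmat s \<times> Dmat k. Fact s M f = M'"
    then obtain R d where R: "R \<in> GLmat s" and d: "d \<in> Dmat k" and F: "Fact s M (R, d) = M'"
      by auto
    have "V' = diag_scale k (\<lambda>i. d $$ (i, i)) ` V"
      using row_space_Fact[OF M(1) R d] F M(3) M'(2) by simp
    moreover have "\<forall>i<k. d $$ (i, i) \<noteq> 0"
      using d by (simp add: Dmat_def)
    ultimately show "\<exists>d. (\<forall>i<k. d i \<noteq> 0) \<and> V' = diag_scale k d ` V"
      by (intro exI[of _ "\<lambda>i. d $$ (i, i)"]) simp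
  next
    assume "\<exists>d. (\<forall>i<k. d i \<noteq> 0) \<and> V' = diag_scale k d ` V"
    then obtain dd where "\<forall>i<k. dd i \<noteq> 0" "V' = diag_scale k dd ` V"
      by blast
    then show "\<exists>f \<in> GLmat s \<times> Dmat k. Fact s M f = M'"
      using Fact_of_scaled_row_space[OF M(1,2) M'(1)] M(3) M'(2) by simp
  qed
qed

section \<open>Intransitive groups whose orbit actions are cyclic of order \<open>p\<close>\<close>

locale cyclic_orbits =
  fixes n k p :: nat and Om :: "nat \<Rightarrow> nat set" and H :: "(nat \<Rightarrow> nat) set"
    and \<phi> :: "nat \<Rightarrow> nat \<Rightarrow> nat" and g1 :: "nat \<Rightarrow> nat"
  assumes p_pos: "0 < p" and k_pos: "0 < k"
    and H_sub: "is_perm_subgroup H (Sn n)"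
    and orb_cover: "(\<Union>i<k. Om i) = {1..n}"
    and orb_disj: "\<forall>i<k. \<forall>j<k. i \<noteq> j \<longrightarrow> Om i \<inter> Om j = {}"
    and orb_card: "\<forall>i<k. card (Om i) = p"
    and orbits: "\<forall>i<k. \<forall>x\<in>Om i. {h x | h. h \<in> H} = Om i"
    and cyc: "\<forall>i<k. cyclic_of_order (restr (Om i) ` H) p"
    and phi: "\<forall>j. 1 \<le> j \<and> j < k \<longrightarrow>
      perm_iso_witness (Om 0) (Om j) (restr (Om 0) ` H) (restr (Om j) ` H) (\<phi> j)"
    and g1_gen: "restr (Om 0) ` H = range (\<lambda>m. g1 ^^ m)"
begin

text \<open>With Om i the paper's \<Omega>_(i+1), the sets G i, the involutions ovphi j and the generators
  gs i are G_(i+1), the overlined \<phi>_(j+1) and g_(i+1); B_gens and K_gens generate B and K.\<close>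

definition G :: "nat \<Rightarrow> (nat \<Rightarrow> nat) set" where
  "G i = restr (Om i) ` H"

definition ovphi :: "nat \<Rightarrow> nat \<Rightarrow> nat" where
  "ovphi j = ovl (Om 0) (Om j) (\<phi> j)"

definition gs :: "nat \<Rightarrow> nat \<Rightarrow> nat" where
  "gs j = (if j = 0 then g1 else conjp g1 (ovphi j))"

definition B_gens :: "(nat \<Rightarrow> nat) set" where
  "B_gens = (\<Union>i<k. {\<sigma>. \<sigma> permutes Om i \<and> (\<lambda>g. conjp g \<sigma>) ` G i = G i})"

definition K_gens :: "(nat \<Rightarrow> nat) set" where
  "K_gens = {ovphi j | j. 1 \<le> j \<and> j < k}"

lemma Om_subset: "i < k \<Longrightarrow> Om i \<subseteq> {1..n}"
  using orb_cover by blast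

lemma Om_finite: "i < k \<Longrightarrow> finite (Om i)"
  using Om_subset finite_subset by blast

lemma Om_disjoint: "i < k \<Longrightarrow> j < k \<Longrightarrow> i \<noteq> j \<Longrightarrow> x \<in> Om i \<Longrightarrow> x \<notin> Om j"
  using orb_disj by blast

lemma in_some_Om: "x \<in> {1..n} \<Longrightarrow> \<exists>i<k. x \<in> Om i"
  using orb_cover by blast

lemma H_permutes: "h \<in> H \<Longrightarrow> h permutes {1..n}"
  using H_sub unfolding is_perm_subgroup_def Sn_def by blast

lemma restr_H_permutes:
  assumes "h \<in> H" "i < k"
  shows "restr (Om i) h permutes Om i"
proof (rule bij_imp_permutes)
  have "inj_on h (Om i)"
    using permutes_inj[OF H_permutes[OF assms(1)]] inj_on_subset by blast
  moreover have "h ` Om i \<subseteq> Om i"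
    using orbits assms by blast
  ultimately have "bij_betw h (Om i) (Om i)"
    using endo_inj_surj[OF Om_finite[OF assms(2)]] by (simp add: bij_betw_def)
  then show "bij_betw (restr (Om i) h) (Om i) (Om i)"
    by (rule bij_betw_cong[THEN iffD1, rotated]) (simp add: restr_def)
qed (simp add: restr_def)

lemma G_permutes: "i < k \<Longrightarrow> g \<in> G i \<Longrightarrow> g permutes Om i"
  unfolding G_def using restr_H_permutes by blast

lemma id_in_G: "id \<in> G i"
proof -
  have "restr (Om i) id = id"
    by (simp add: restr_def fun_eq_iff)
  moreover have "id \<in> H"
    using H_sub by (simp add: is_perm_subgroup_def)
  ultimately show ?thesis
    unfolding G_def by (metis image_eqI)
qed

lemma card_G: "i < k \<Longrightarrow> card (G i) = p"
  using cyc by (simp add: G_def cyclic_of_order_def)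

lemma G_commutes_disjoint:
  assumes "i < k" "j < k" "i \<noteq> j" "h \<in> G i" "\<sigma> permutes Om j"
  shows "conjp h \<sigma> = h"
proof (rule conjp_commuting)
  show "bij \<sigma>"
    using assms(5) by (rule permutes_bij)
  have "h permutes Om i"
    using assms(1,4) by (rule G_permutes)
  moreover have "Om j \<inter> Om i = {}"
    using orb_disj assms(1-3) by blast
  ultimately show "\<sigma> \<circ> h = h \<circ> \<sigma>"
    using permutes_disjoint_commute[OF assms(5)] by blast
qed

context
  fixes j assumes j: "1 \<le> j" "j < k"
begin

lemma phi_bij: "bij_betw (\<phi> j) (Om 0) (Om j)"
  using phi j unfolding perm_iso_witness_def by blast

lemma ovphi_Om0: "x \<in> Om 0 \<Longrightarrow> ovphi j x = \<phi> j x" "x \<in> Om 0 \<Longrightarrow> ovphi j x \<in> Om j"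
  using phi_bij by (auto simp: ovphi_def ovl_def bij_betw_def)

lemma ovphi_Omj: "x \<in> Om j \<Longrightarrow> ovphi j x \<in> Om 0"
  using phi_bij Om_disjoint[OF k_pos j(2)] j
  by (auto simp: ovphi_def ovl_def bij_betw_def inv_into_into)

lemma ovphi_outside: "x \<notin> Om 0 \<Longrightarrow> x \<notin> Om j \<Longrightarrow> ovphi j x = x"
  by (simp add: ovphi_def ovl_def)

lemma ovphi_ovphi: "ovphi j (ovphi j x) = x"
proof -
  have disj: "Om 0 \<inter> Om j = {}"
    using orb_disj k_pos j by auto
  consider "x \<in> Om 0" | "x \<in> Om j" | "x \<notin> Om 0" "x \<notin> Om j"
    by blast
  then show ?thesis
  proof cases
    case 1
    then show ?thesis
      using phi_bij disj by (auto simp: ovphi_def ovl_def bij_betw_def)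
  next
    case 2
    then have "inv_into (Om 0) (\<phi> j) x \<in> Om 0" "\<phi> j (inv_into (Om 0) (\<phi> j) x) = x"
      using phi_bij by (auto simp: bij_betw_def inv_into_into f_inv_into_f)
    then show ?thesis
      using 2 disj by (auto simp: ovphi_def ovl_def)
  qed (simp add: ovphi_outside)
qed

lemma ovphi_permutes_Un: "ovphi j permutes (Om 0 \<union> Om j)"
  by (rule involution_permutes) (simp_all add: ovphi_ovphi ovphi_outside)

lemma ovphi_permutes: "ovphi j permutes {1..n}"
proof -
  note ovphi_permutes_Un
  moreover have "Om 0 \<union> Om j \<subseteq> {1..n}"
    using Om_subset[OF k_pos] Om_subset[OF j(2)] by blast
  ultimately show ?thesis
    by (rule permutes_subset)
qed

lemma inv_ovphi: "inv_into UNIV (ovphi j) = ovphi j"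
  by (rule inv_unique_comp) (simp_all add: fun_eq_iff ovphi_ovphi)

end

lemma g1_in_G: "g1 \<in> G 0"
proof -
  have "g1 = g1 ^^ 1"
    by simp
  then show ?thesis
    using g1_gen unfolding G_def by (metis rangeI)
qed

lemma perm_iso_image_g1:
  assumes j: "1 \<le> j" "j < k" and f: "f \<in> G j"
    and compat: "\<forall>\<alpha>\<in>Om 0. \<phi> j (g1 \<alpha>) = f (\<phi> j \<alpha>)"
  shows "f = gs j"
proof -
  have g1: "g1 permutes Om 0" and fp: "f permutes Om j"
    using G_permutes[OF k_pos g1_in_G] G_permutes[OF j(2) f] .
  have disj: "x \<in> Om 0 \<Longrightarrow> x \<notin> Om j" for x
    using Om_disjoint[OF k_pos j(2)] j by simp
  have "ovphi j \<circ> g1 = f \<circ> ovphi j"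
  proof
    fix x
    consider "x \<in> Om 0" | "x \<in> Om j" | "x \<notin> Om 0" "x \<notin> Om j"
      by blast
    then show "(ovphi j \<circ> g1) x = (f \<circ> ovphi j) x"
    proof cases
      case 1
      then have "g1 x \<in> Om 0"
        using g1 by (simp add: permutes_in_image)
      then show ?thesis
        using 1 compat ovphi_Om0[OF j] by simp
    next
      case 2
      then have "ovphi j x \<in> Om 0" "x \<notin> Om 0"
        using ovphi_Omj[OF j] disj by blast+
      then have "g1 x = x" "f (ovphi j x) = ovphi j x"
        using permutes_not_in[OF g1] permutes_not_in[OF fp] disj by blast+
      then show ?thesis
        by simp
    next
      case 3
      then have "g1 x = x" "f x = x" "ovphi j x = x"
        using permutes_not_in[OF g1] permutes_not_in[OF fp] ovphi_outside[OF j] by blast+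
      then show ?thesis
        by simp
    qed
  qed
  then have "conjp g1 (ovphi j) = f"
    using conjp_eq_iff[OF permutes_bij[OF ovphi_permutes[OF j]]] by blast
  then show ?thesis
    using j by (simp add: gs_def)
qed

lemma G_eq_range_gs: "i < k \<Longrightarrow> G i = range (\<lambda>m. gs i ^^ m)"
proof (cases "i = 0")
  case True
  then show ?thesis
    using g1_gen by (simp add: G_def gs_def)
next
  case False
  assume "i < k"
  with False have j: "1 \<le> i" "i < k"
    by auto
  obtain \<psi> where bij: "bij_betw \<psi> (G 0) (G i)"
    and hom: "\<forall>g\<in>G 0. \<forall>h\<in>G 0. \<psi> (g \<circ> h) = \<psi> g \<circ> \<psi> h"
    and compat: "\<forall>g\<in>G 0. \<forall>\<alpha>\<in>Om 0. \<phi> i (g \<alpha>) = \<psi> g (\<phi> i \<alpha>)"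
    using phi j unfolding perm_iso_witness_def G_def by blast
  have G0: "G 0 = range (\<lambda>m. g1 ^^ m)"
    using g1_gen by (simp add: G_def)
  have "\<psi> g1 = gs i"
    using perm_iso_image_g1[OF j] bij_betwE[OF bij] g1_in_G compat by blast
  moreover have "bij (\<psi> id)"
    using G_permutes[OF j(2)] bij_betwE[OF bij] id_in_G permutes_bij by blast
  moreover have "\<forall>x\<in>range (\<lambda>m. g1 ^^ m). \<forall>y\<in>range (\<lambda>m. g1 ^^ m). \<psi> (x \<circ> y) = \<psi> x \<circ> \<psi> y"
    using hom unfolding G0 .
  ultimately have "\<psi> ` G 0 = range (\<lambda>m. gs i ^^ m)"
    unfolding G0 using hom_image_funpow_range by metis
  then show ?thesis
    using bij by (simp add: bij_betw_def)
qed

lemma gs_in_G: "i < k \<Longrightarrow> gs i \<in> G i"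
  using G_eq_range_gs[of i] rangeI[of "\<lambda>m. gs i ^^ m" 1] by simp

lemma gs_permutes: "i < k \<Longrightarrow> gs i permutes Om i"
  using G_permutes gs_in_G by blast

lemma gs_period:
  assumes "i < k"
  shows "gs i ^^ p = id"
proof (rule funpow_card_range_eq_id[OF permutes_bij[OF gs_permutes[OF assms]] _ p_pos])
  show "card (range (\<lambda>m. gs i ^^ m)) = p"
    using card_G[OF assms] unfolding G_eq_range_gs[OF assms] .
qed

lemma conjp_gs_ovphi:
  assumes j: "1 \<le> j" "j < k" and i: "i < k"
  shows "conjp (gs i) (ovphi j) = gs (Transposition.transpose 0 j i)"
proof -
  have bij: "bij (ovphi j)"
    using permutes_bij[OF ovphi_permutes[OF j]] .
  consider "i = 0" | "i = j" | "i \<noteq> 0" "i \<noteq> j"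
    by blast
  then show ?thesis
  proof cases
    case 1
    then show ?thesis
      using j by (simp add: gs_def)
  next
    case 2
    have "conjp (gs j) (ovphi j) = conjp (conjp g1 (ovphi j)) (inv_into UNIV (ovphi j))"
      using j by (simp add: gs_def inv_ovphi)
    also have "\<dots> = g1"
      by (rule conjp_conjp_inv[OF bij])
    finally show ?thesis
      using 2 by (simp add: gs_def)
  next
    case 3
    have "(Om 0 \<union> Om j) \<inter> Om i = {}"
      using orb_disj 3 i j k_pos by blast
    then have "ovphi j \<circ> gs i = gs i \<circ> ovphi j"
      using permutes_disjoint_commute[OF ovphi_permutes_Un[OF j] gs_permutes[OF i]] by blast
    then have "conjp (gs i) (ovphi j) = gs i"
      by (rule conjp_commuting[OF bij])
    then show ?thesis
      using 3 by simp
  qed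
qed

lemma ovphi_maps_Om:
  assumes j: "1 \<le> j" "j < k" and i: "i < k"
  shows "ovphi j ` Om i \<subseteq> Om (Transposition.transpose 0 j i)"
proof
  fix y assume "y \<in> ovphi j ` Om i"
  then obtain x where x: "x \<in> Om i" "y = ovphi j x"
    by blast
  consider "i = 0" | "i = j" | "i \<noteq> 0" "i \<noteq> j"
    by blast
  then show "y \<in> Om (Transposition.transpose 0 j i)"
  proof cases
    case 1
    then show ?thesis
      using x ovphi_Om0(2)[OF j] by simp
  next
    case 2
    then show ?thesis
      using x ovphi_Omj[OF j] by simp
  next
    case 3
    then have "x \<notin> Om 0" "x \<notin> Om j"
      using Om_disjoint[OF i] k_pos j x(1) by blast+
    then show ?thesis
      using 3 x ovphi_outside[OF j] by simp
  qed
qed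

definition block_normaliser :: "(nat \<Rightarrow> nat) \<Rightarrow> bool" where
  "block_normaliser b \<longleftrightarrow>
    b permutes {1..n} \<and> (\<forall>i<k. b ` Om i \<subseteq> Om i \<and> (\<lambda>h. conjp h b) ` G i = G i)"

lemma B_gens_inv_closed: "s \<in> B_gens \<Longrightarrow> inv_into UNIV s \<in> B_gens"
  unfolding B_gens_def
  using permutes_inv conjp_image_eq_iff[OF permutes_bij] by fastforce

lemma B_gen_preserves_block:
  assumes s: "s permutes Om i0" "(\<lambda>g. conjp g s) ` G i0 = G i0" "i0 < k" and i: "i < k"
  shows "s ` Om i \<subseteq> Om i \<and> (\<lambda>h. conjp h s) ` G i = G i"
proof (cases "i = i0")
  case True
  then show ?thesis
    using s permutes_image[OF s(1)] by simp
next
  case False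
  have "s ` Om i \<subseteq> Om i"
    using permutes_not_in[OF s(1)] Om_disjoint[OF i s(3) False] by auto
  moreover have "(\<lambda>h. conjp h s) ` G i = G i"
    using G_commutes_disjoint[OF i s(3) False _ s(1)] by simp
  ultimately show ?thesis
    by blast
qed

lemma block_normaliser_step:
  assumes s: "s permutes Om i0" "(\<lambda>g. conjp g s) ` G i0 = G i0" "i0 < k"
    and b: "block_normaliser b"
  shows "block_normaliser (s \<circ> b)"
proof -
  have bij_s: "bij s" and bij_b: "bij b" and b_perm: "b permutes {1..n}"
    using permutes_bij[OF s(1)] b by (auto simp: block_normaliser_def permutes_bij)
  have "s permutes {1..n}"
    using s(1) Om_subset[OF s(3)] by (rule permutes_subset)
  then have "s \<circ> b permutes {1..n}"
    by (rule permutes_compose[OF b_perm])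
  moreover have "(s \<circ> b) ` Om i \<subseteq> Om i \<and> (\<lambda>h. conjp h (s \<circ> b)) ` G i = G i" if i: "i < k" for i
  proof -
    have "b ` Om i \<subseteq> Om i" "(\<lambda>h. conjp h b) ` G i = G i"
      using b i by (simp_all add: block_normaliser_def)
    with B_gen_preserves_block[OF s i] show ?thesis
      unfolding conjp_image_comp[OF bij_s bij_b] image_comp[symmetric] by (metis image_mono order_trans)
  qed
  ultimately show ?thesis
    by (simp add: block_normaliser_def)
qed

lemma block_normaliser_gen_perm: "b \<in> gen_perm B_gens \<Longrightarrow> block_normaliser b"
proof (induction rule: gen_perm_induct_inv_closed)
  case (inv s)
  then show ?case
    by (rule B_gens_inv_closed)
next
  case id
  have "id ` Om i \<subseteq> Om i" "(\<lambda>h. conjp h id) ` G i = G i" for i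
    unfolding conjp_id_right by auto
  then show ?case
    unfolding block_normaliser_def using permutes_id by blast
next
  case (step s b)
  then obtain i0 where "i0 < k" "s permutes Om i0" "(\<lambda>g. conjp g s) ` G i0 = G i0"
    by (auto simp: B_gens_def)
  then show ?case
    using block_normaliser_step step.IH by blast
qed

end

section \<open>Coordinates\<close>

context cyclic_orbits
begin

text \<open>Coordinates live in \<open>'q mod_ring\<close>, which models \<bbbF>_p.\<close>

context
  assumes card_q: "CARD('q::prime_card) = p"
begin

lemma gs_period_card: "i < k \<Longrightarrow> gs i ^^ CARD('q) = id"
  using gs_period card_q by simp

lemma G_eq_range_funpow_res: "i < k \<Longrightarrow> G i = range (funpow_res (gs i) :: 'q mod_ring \<Rightarrow> _)"
  by (simp add: G_eq_range_gs range_funpow_res gs_period_card)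

lemma funpow_res_gs_permutes: "i < k \<Longrightarrow> funpow_res (gs i) (t :: 'q mod_ring) permutes Om i"
  using G_permutes G_eq_range_funpow_res by blast

lemma inj_funpow_res_gs:
  assumes "i < k"
  shows "inj (funpow_res (gs i) :: 'q mod_ring \<Rightarrow> _)"
proof (rule eq_card_imp_inj_on)
  show "card (range (funpow_res (gs i) :: 'q mod_ring \<Rightarrow> _)) = card (UNIV :: 'q mod_ring set)"
    using card_G[OF assms] card_q unfolding G_eq_range_funpow_res[OF assms] by simp
qed simp

lemma gs_orbit_bij:
  assumes "i < k" "a \<in> Om i"
  shows "bij_betw (\<lambda>t :: 'q mod_ring. funpow_res (gs i) t a) UNIV (Om i)"
proof -
  have "Om i \<subseteq> range (\<lambda>t :: 'q mod_ring. funpow_res (gs i) t a)"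
  proof
    fix x assume "x \<in> Om i"
    then obtain h where h: "h \<in> H" "x = h a"
      using orbits assms by blast
    then have "restr (Om i) h \<in> range (funpow_res (gs i) :: 'q mod_ring \<Rightarrow> _)"
      using G_eq_range_funpow_res[OF assms(1)] by (auto simp: G_def)
    then obtain t :: "'q mod_ring" where "restr (Om i) h = funpow_res (gs i) t"
      by blast
    then have "x = funpow_res (gs i) t a"
      using h(2) assms(2) by (metis restr_def)
    then show "x \<in> range (\<lambda>t :: 'q mod_ring. funpow_res (gs i) t a)"
      by blast
  qed
  moreover have "range (\<lambda>t :: 'q mod_ring. funpow_res (gs i) t a) \<subseteq> Om i"
    using funpow_res_gs_permutes[OF assms(1)] assms(2) by (auto simp: permutes_in_image)
  ultimately have image: "range (\<lambda>t :: 'q mod_ring. funpow_res (gs i) t a) = Om i"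
    by blast
  moreover have "inj (\<lambda>t :: 'q mod_ring. funpow_res (gs i) t a)"
    by (rule eq_card_imp_inj_on) (simp_all add: image orb_card assms(1) card_q)
  ultimately show ?thesis
    by (simp add: bij_betw_def)
qed

lemma prod_pows_eq_foldr:
  "prod_pows k gs r = foldr (\<lambda>i f. f \<circ> funpow_res (gs i) (r $ i :: 'q mod_ring)) [0..<k] id"
  unfolding prod_pows_def funpow_res_def ..

lemma prod_pows_apply:
  assumes "i < k" "x \<in> Om i"
  shows "prod_pows k gs r x = funpow_res (gs i) (r $ i :: 'q mod_ring) x"
  unfolding prod_pows_eq_foldr
proof (rule foldr_comp_apply)
  show "funpow_res (gs i) (r $ i) x \<in> Om i"
    using funpow_res_gs_permutes[OF assms(1)] assms(2) by (simp add: permutes_in_image)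
  show "\<forall>j\<in>set [0..<k]. j \<noteq> i \<longrightarrow> (\<forall>y\<in>Om i. funpow_res (gs j) (r $ j :: 'q mod_ring) y = y)"
  proof (intro ballI impI)
    fix j y assume "j \<in> set [0..<k]" "j \<noteq> i" "y \<in> Om i"
    then have "j < k" "y \<notin> Om j"
      using Om_disjoint[OF assms(1)] by auto
    then show "funpow_res (gs j) (r $ j) y = y"
      using permutes_not_in[OF funpow_res_gs_permutes] by blast
  qed
qed (use assms in simp_all)

lemma prod_pows_outside:
  assumes "x \<notin> {1..n}"
  shows "prod_pows k gs (r :: 'q mod_ring vec) x = x"
  unfolding prod_pows_eq_foldr
proof (rule foldr_comp_fixes)
  show "\<forall>i\<in>set [0..<k]. funpow_res (gs i) (r $ i) x = x"
  proof
    fix i assume "i \<in> set [0..<k]"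
    then have "i < k"
      by simp
    moreover have "x \<notin> Om i"
      using Om_subset[OF \<open>i < k\<close>] assms by blast
    ultimately show "funpow_res (gs i) (r $ i) x = x"
      using permutes_not_in[OF funpow_res_gs_permutes] by blast
  qed
qed

lemma prod_pows_inj:
  assumes r: "r \<in> carrier_vec k" "r' \<in> carrier_vec k"
    and eq: "prod_pows k gs (r :: 'q mod_ring vec) = prod_pows k gs r'"
  shows "r = r'"
proof (rule eq_vecI)
  fix i assume "i < dim_vec r'"
  then have i: "i < k"
    using r by simp
  have "funpow_res (gs i) (r $ i) = funpow_res (gs i) (r' $ i)"
  proof
    fix x
    show "funpow_res (gs i) (r $ i) x = funpow_res (gs i) (r' $ i) x"
    proof (cases "x \<in> Om i")
      case True
      then show ?thesis
        using eq prod_pows_apply[OF i True] by metis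
    next
      case False
      then show ?thesis
        using permutes_not_in[OF funpow_res_gs_permutes[OF i] False] by simp
    qed
  qed
  then show "r $ i = r' $ i"
    using inj_funpow_res_gs[OF i] by (simp add: inj_eq)
qed (use r in simp)

lemma gammap_prod_pows:
  assumes "r \<in> carrier_vec k"
  shows "gammap k gs (prod_pows k gs r) = (r :: 'q mod_ring vec)"
  unfolding gammap_def
proof (rule the_equality)
  show "r' = r" if "r' \<in> carrier_vec k \<and> prod_pows k gs r = prod_pows k gs r'" for r'
    using prod_pows_inj[of r' r] that assms by simp
qed (use assms in simp)

lemma H_subset_prod_pows: "H \<subseteq> prod_pows k gs ` (carrier_vec k :: 'q mod_ring vec set)"
proof
  fix h assume h: "h \<in> H"
  have "\<forall>i\<in>{..<k}. \<exists>t :: 'q mod_ring. restr (Om i) h = funpow_res (gs i) t"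
  proof
    fix i assume "i \<in> {..<k}"
    then have "G i = range (funpow_res (gs i) :: 'q mod_ring \<Rightarrow> _)"
      by (simp add: G_eq_range_funpow_res)
    moreover have "restr (Om i) h \<in> G i"
      using h by (simp add: G_def)
    ultimately show "\<exists>t :: 'q mod_ring. restr (Om i) h = funpow_res (gs i) t"
      by (metis rangeE)
  qed
  from bchoice[OF this] obtain t :: "nat \<Rightarrow> 'q mod_ring"
    where t: "\<forall>i\<in>{..<k}. restr (Om i) h = funpow_res (gs i) (t i)"
    by blast
  have "h = prod_pows k gs (vec k t)"
  proof
    fix x
    show "h x = prod_pows k gs (vec k t) x"
    proof (cases "x \<in> {1..n}")
      case True
      then obtain i where i: "i < k" "x \<in> Om i"
        using in_some_Om by blast
      then have "h x = restr (Om i) h x"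
        by (simp add: restr_def)
      also have "\<dots> = funpow_res (gs i) (t i) x"
        using t i(1) by simp
      finally show ?thesis
        using prod_pows_apply[OF i] i(1) by simp
    next
      case False
      then show ?thesis
        using permutes_not_in[OF H_permutes[OF h] False] prod_pows_outside by simp
    qed
  qed
  then show "h \<in> prod_pows k gs ` (carrier_vec k :: 'q mod_ring vec set)"
    by (rule image_eqI) simp
qed

lemma prod_pows_gammap:
  assumes "g \<in> prod_pows k gs ` (carrier_vec k :: 'q mod_ring vec set)"
  shows "prod_pows k gs (gammap k gs g :: 'q mod_ring vec) = g"
proof -
  obtain r :: "'q mod_ring vec" where "r \<in> carrier_vec k" "g = prod_pows k gs r"
    using assms by blast
  then show ?thesis
    by (simp add: gammap_prod_pows)
qed

lemma inj_on_gammap: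
  "inj_on (gammap k gs :: _ \<Rightarrow> 'q mod_ring vec) (prod_pows k gs ` (carrier_vec k :: 'q mod_ring vec set))"
proof (rule inj_onI)
  fix g g' assume "g \<in> prod_pows k gs ` (carrier_vec k :: 'q mod_ring vec set)"
    "g' \<in> prod_pows k gs ` (carrier_vec k :: 'q mod_ring vec set)"
    and "(gammap k gs g :: 'q mod_ring vec) = gammap k gs g'"
  then show "g = g'"
    using prod_pows_gammap by metis
qed

text \<open>Elements of \<open>K\<close> (with \<open>c = 1\<close>) and of \<open>B\<close> (with \<open>\<tau> = id\<close>) have this form.\<close>

lemma conjp_prod_pows_monomial:
  fixes c :: "nat \<Rightarrow> 'q mod_ring" and r r' :: "'q mod_ring vec"
  assumes b: "b permutes {1..n}"
    and blocks: "\<forall>i<k. \<tau> i < k \<and> b ` Om i \<subseteq> Om (\<tau> i) \<and> conjp (gs i) b = funpow_res (gs (\<tau> i)) (c i)"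
    and r': "\<forall>i<k. r' $ \<tau> i = r $ i * c i"
  shows "conjp (prod_pows k gs r) b = prod_pows k gs r'"
proof -
  have bij: "bij b"
    using b by (rule permutes_bij)
  have "b \<circ> prod_pows k gs r = prod_pows k gs r' \<circ> b"
  proof
    fix y
    show "(b \<circ> prod_pows k gs r) y = (prod_pows k gs r' \<circ> b) y"
    proof (cases "y \<in> {1..n}")
      case True
      then obtain i where i: "i < k" "y \<in> Om i"
        using in_some_Om by blast
      have "conjp (funpow_res (gs i) (r $ i)) b = funpow_res (gs (\<tau> i)) (r' $ \<tau> i)"
        using blocks r' i(1) gs_period_card
        by (simp add: conjp_funpow_res[OF bij] funpow_res_funpow_res mult.commute)
      then have "b (funpow_res (gs i) (r $ i) y) = funpow_res (gs (\<tau> i)) (r' $ \<tau> i) (b y)"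
        using conjp_apply[OF bij] by metis
      moreover have "\<tau> i < k" "b y \<in> Om (\<tau> i)"
        using blocks i by blast+
      ultimately show ?thesis
        using prod_pows_apply[OF i] prod_pows_apply[of "\<tau> i" "b y" r'] by simp
    next
      case False
      then show ?thesis
        using permutes_not_in[OF b False] prod_pows_outside by simp
    qed
  qed
  then show ?thesis
    using conjp_eq_iff[OF bij] by blast
qed

lemma conjp_prod_pows_ovphi:
  assumes j: "1 \<le> j" "j < k"
  shows "conjp (prod_pows k gs r) (ovphi j) =
    prod_pows k gs (vec k (\<lambda>i. r $ Transposition.transpose 0 j i) :: 'q mod_ring vec)"
proof (rule conjp_prod_pows_monomial[OF ovphi_permutes[OF j]])
  have \<tau>: "Transposition.transpose 0 j i < k" if "i < k" for i
    using that j k_pos by (simp add: Transposition.transpose_def)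
  then show "\<forall>i<k. Transposition.transpose 0 j i < k \<and> ovphi j ` Om i \<subseteq> Om (Transposition.transpose 0 j i) \<and>
      conjp (gs i) (ovphi j) = funpow_res (gs (Transposition.transpose 0 j i)) 1"
    using ovphi_maps_Om[OF j] conjp_gs_ovphi[OF j] by (simp add: funpow_res_1)
  from \<tau> show "\<forall>i<k. vec k (\<lambda>i. r $ Transposition.transpose 0 j i) $ Transposition.transpose 0 j i = r $ i * 1"
    by simp
qed

lemma conjp_K_gen_prod_pows:
  assumes "s \<in> K_gens" and "x \<in> (prod_pows k gs ` (carrier_vec k :: 'q mod_ring vec set))"
  shows "conjp x s \<in> (prod_pows k gs ` (carrier_vec k :: 'q mod_ring vec set))"
proof -
  obtain j where j: "1 \<le> j" "j < k" "s = ovphi j"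
    using assms(1) unfolding K_gens_def by blast
  obtain r :: "'q mod_ring vec" where "x = prod_pows k gs r"
    using assms(2) by blast
  then have "conjp x s = prod_pows k gs (vec k (\<lambda>i. r $ Transposition.transpose 0 j i))"
    using conjp_prod_pows_ovphi[OF j(1,2)] j(3) by simp
  then show ?thesis
    by (rule image_eqI) simp
qed

lemma K_conj_prod_pows:
  assumes "\<kappa> \<in> gen_perm K_gens"
  shows "\<kappa> permutes {1..n} \<and> (\<lambda>g. conjp g (inv_into UNIV \<kappa>)) ` (prod_pows k gs ` (carrier_vec k :: 'q mod_ring vec set)) \<subseteq> (prod_pows k gs ` (carrier_vec k :: 'q mod_ring vec set))"
  using assms
proof (induction rule: gen_perm_induct_inv_closed)
  case (inv s)
  then obtain j where j: "1 \<le> j" "j < k" "s = ovphi j"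
    unfolding K_gens_def by blast
  then have "inv_into UNIV s = ovphi j"
    using inv_ovphi by simp
  then show ?case
    unfolding K_gens_def using j(1,2) by blast
next
  case id
  have "(\<lambda>g. conjp g (inv_into UNIV id)) ` (prod_pows k gs ` (carrier_vec k :: 'q mod_ring vec set)) \<subseteq> (prod_pows k gs ` (carrier_vec k :: 'q mod_ring vec set))"
    unfolding conjp_inv_id by simp
  then show ?case
    by (rule conjI[OF permutes_id])
next
  case (step s g)
  then obtain j where j: "1 \<le> j" "j < k" "s = ovphi j"
    unfolding K_gens_def by blast
  have s: "s permutes {1..n}" "bij s" "inv_into UNIV s = s"
    using ovphi_permutes[OF j(1,2)] permutes_bij[OF ovphi_permutes[OF j(1,2)]] inv_ovphi[OF j(1,2)]
    unfolding j(3) by blast+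
  have g: "g permutes {1..n}" "bij g"
    using step.IH permutes_bij by blast+
  have "inv_into UNIV (s \<circ> g) = inv_into UNIV g \<circ> s"
    using o_inv_distrib[OF s(2) g(2)] s(3) by simp
  then have conj_sg: "conjp x (inv_into UNIV (s \<circ> g)) = conjp (conjp x s) (inv_into UNIV g)" for x
    by (simp only: conjp_comp[OF bij_imp_bij_inv[OF g(2)] s(2)])
  have "conjp x (inv_into UNIV (s \<circ> g)) \<in> (prod_pows k gs ` (carrier_vec k :: 'q mod_ring vec set))" if "x \<in> (prod_pows k gs ` (carrier_vec k :: 'q mod_ring vec set))" for x
    using step.IH conjp_K_gen_prod_pows[OF \<open>s \<in> K_gens\<close> that] unfolding conj_sg by blast
  then show ?case
    using permutes_compose[OF g(1) s(1)] by blast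
qed

lemma block_normaliser_scalar:
  assumes b: "block_normaliser b" and i: "i < k"
  shows "\<exists>c :: 'q mod_ring. c \<noteq> 0 \<and> conjp (gs i) b = funpow_res (gs i) c"
proof -
  have bij: "bij b"
    using b permutes_bij by (auto simp: block_normaliser_def)
  have "conjp (gs i) b \<in> (\<lambda>h. conjp h b) ` G i"
    using gs_in_G[OF i] by (rule imageI)
  moreover have "(\<lambda>h. conjp h b) ` G i = G i"
    using b i by (simp add: block_normaliser_def)
  ultimately have "conjp (gs i) b \<in> G i"
    by simp
  then have "conjp (gs i) b \<in> range (funpow_res (gs i) :: 'q mod_ring \<Rightarrow> _)"
    unfolding G_eq_range_funpow_res[OF i] .
  then obtain c :: "'q mod_ring" where c: "conjp (gs i) b = funpow_res (gs i) c"
    by blast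
  have "c \<noteq> 0"
  proof
    assume "c = 0"
    then have "conjp (gs i) b = conjp id b"
      using c funpow_res_0 conjp_id[OF bij] by simp
    then have "funpow_res (gs i) 1 = funpow_res (gs i) (0 :: 'q mod_ring)"
      using injD[OF inj_conjp[OF bij]] by (simp add: funpow_res_0 funpow_res_1)
    then have "(1 :: 'q mod_ring) = 0"
      by (rule injD[OF inj_funpow_res_gs[OF i]])
    then show False
      by simp
  qed
  then show ?thesis
    using c by blast
qed

lemma exists_block_scaling:
  assumes i: "i < k" and c: "c \<noteq> (0 :: 'q mod_ring)"
  shows "\<exists>\<sigma>\<in>B_gens. \<sigma> permutes Om i \<and> conjp (gs i) \<sigma> = funpow_res (gs i) c"
proof -
  have "Om i \<noteq> {}"
    using orb_card i p_pos by auto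
  then obtain a where a: "a \<in> Om i"
    by blast
  have "\<forall>x. x \<notin> Om i \<longrightarrow> gs i x = x"
    using permutes_not_in[OF gs_permutes[OF i]] by blast
  then obtain \<sigma> where \<sigma>: "\<sigma> permutes Om i" "\<sigma> \<circ> gs i = funpow_res (gs i) c \<circ> \<sigma>"
    using exists_intertwiner_on_regular_orbit[OF gs_period_card[OF i] gs_orbit_bij[OF i a] _ c]
    by blast
  have bij: "bij \<sigma>"
    using \<sigma>(1) by (rule permutes_bij)
  have conj_gs: "conjp (gs i) \<sigma> = funpow_res (gs i) c"
    using conjp_eq_iff[OF bij] \<sigma>(2) by blast
  have "c * (inverse c * t) = t" for t
    using c by (simp add: mult.assoc[symmetric])
  then have "range ((*) c) = UNIV"
    by (metis surjI)
  then have "range (\<lambda>t. funpow_res (gs i) (c * t)) = range (funpow_res (gs i) :: 'q mod_ring \<Rightarrow> _)"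
    by (simp only: image_image[of "funpow_res (gs i)" "(*) c", symmetric])
  moreover have "(\<lambda>h. conjp h \<sigma>) ` G i = range (\<lambda>t. funpow_res (gs i) (c * t))"
    unfolding G_eq_range_funpow_res[OF i] image_image conjp_funpow_res[OF bij] conj_gs
      funpow_res_funpow_res[OF gs_period_card[OF i]] ..
  ultimately have "(\<lambda>h. conjp h \<sigma>) ` G i = G i"
    using G_eq_range_funpow_res[OF i] by simp
  then have "\<sigma> \<in> B_gens"
    using \<sigma>(1) i by (auto simp: B_gens_def)
  then show ?thesis
    using \<sigma>(1) conj_gs by blast
qed

lemma conjp_gs_block_scaling:
  assumes \<sigma>: "\<sigma> permutes Om m" "m < k" "conjp (gs m) \<sigma> = funpow_res (gs m) c"
    and b: "bij b" and i: "i < k" and e: "conjp (gs i) b = funpow_res (gs i) (e :: 'q mod_ring)"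
  shows "conjp (gs i) (\<sigma> \<circ> b) = funpow_res (gs i) (if i = m then c * e else e)"
proof -
  have bij: "bij \<sigma>"
    using \<sigma>(1) by (rule permutes_bij)
  have "conjp (gs i) (\<sigma> \<circ> b) = funpow_res (conjp (gs i) \<sigma>) e"
    unfolding conjp_comp[OF bij b] e by (rule conjp_funpow_res[OF bij])
  also have "\<dots> = funpow_res (gs i) (if i = m then c * e else e)"
  proof (cases "i = m")
    case True
    then show ?thesis
      using \<sigma>(3) funpow_res_funpow_res[OF gs_period_card[OF i]] by simp
  next
    case False
    then show ?thesis
      using G_commutes_disjoint[OF i \<sigma>(2) False gs_in_G[OF i] \<sigma>(1)] by simp
  qed
  finally show ?thesis .
qed

text \<open>The element of \<open>B\<close> is built by rescaling one orbit at a time.\<close>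

lemma B_realises_scaling:
  assumes d: "\<forall>i<k. d i \<noteq> (0 :: 'q mod_ring)"
  shows "\<exists>b\<in>gen_perm B_gens. \<forall>i<k. conjp (gs i) b = funpow_res (gs i) (d i)"
proof -
  have "\<exists>b\<in>gen_perm B_gens. \<forall>i<k. conjp (gs i) b = funpow_res (gs i) (if i < m then d i else 1)" for m
  proof (induction m)
    case 0
    have "\<forall>i<k. conjp (gs i) id = funpow_res (gs i) (if i < 0 then d i else 1)"
      unfolding conjp_id_right by (simp add: funpow_res_1)
    then show ?case
      using gen_perm.gen_id by blast
  next
    case (Suc m)
    then obtain b where b: "b \<in> gen_perm B_gens"
      and conj_b: "\<forall>i<k. conjp (gs i) b = funpow_res (gs i) (if i < m then d i else 1)"
      by blast
    show ?case
    proof (cases "m < k")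
      case False
      then have "\<forall>i<k. conjp (gs i) b = funpow_res (gs i) (if i < Suc m then d i else 1)"
        using conj_b by simp
      then show ?thesis
        using b by blast
    next
      case True
      obtain \<sigma> where \<sigma>: "\<sigma> \<in> B_gens" "\<sigma> permutes Om m" "conjp (gs m) \<sigma> = funpow_res (gs m) (d m)"
        using exists_block_scaling[OF True] d True by blast
      have "bij b"
        using block_normaliser_gen_perm[OF b] permutes_bij by (auto simp: block_normaliser_def)
      have "conjp (gs i) (\<sigma> \<circ> b) = funpow_res (gs i) (if i < Suc m then d i else 1)" if i: "i < k" for i
        using conjp_gs_block_scaling[OF \<sigma>(2) True \<sigma>(3) \<open>bij b\<close> i] conj_b i
        by (cases "i = m") (simp_all add: less_Suc_eq)
      moreover have "\<sigma> \<circ> b \<in> gen_perm B_gens"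
        by (rule gen_perm_comp[OF gen_perm_base[OF \<sigma>(1)] b])
      ultimately show ?thesis
        by blast
    qed
  qed
  from this[of k] show ?thesis
    by simp
qed

lemma conjp_prod_pows_scaling:
  assumes b: "b \<in> gen_perm B_gens" and d: "\<forall>i<k. conjp (gs i) b = funpow_res (gs i) (d i)"
  shows "conjp (prod_pows k gs r) b = prod_pows k gs (diag_scale k d r :: 'q mod_ring vec)"
  using block_normaliser_gen_perm[OF b] d
  by (intro conjp_prod_pows_monomial[where \<tau> = id and c = d])
    (auto simp: block_normaliser_def diag_scale_def)

lemma conjp_H_scaling:
  assumes b: "b \<in> gen_perm B_gens" and d: "\<forall>i<k. conjp (gs i) b = funpow_res (gs i) (d i)"
    and h: "h \<in> H"
  shows "conjp h b = prod_pows k gs (diag_scale k d (gammap k gs h :: 'q mod_ring vec))"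
proof -
  have "prod_pows k gs (gammap k gs h :: 'q mod_ring vec) = h"
    by (rule prod_pows_gammap) (use H_subset_prod_pows h in blast)
  moreover have "conjp (prod_pows k gs (gammap k gs h :: 'q mod_ring vec)) b =
      prod_pows k gs (diag_scale k d (gammap k gs h :: 'q mod_ring vec))"
    by (rule conjp_prod_pows_scaling[OF b d])
  ultimately show ?thesis
    by simp
qed

lemma conj_B_H_coords:
  assumes b: "b \<in> gen_perm B_gens" and d: "\<forall>i<k. conjp (gs i) b = funpow_res (gs i) (d i)"
  shows "(\<lambda>h. conjp h b) ` H \<subseteq> (prod_pows k gs ` (carrier_vec k :: 'q mod_ring vec set))"
    and "(gammap k gs :: _ \<Rightarrow> 'q mod_ring vec) ` (\<lambda>h. conjp h b) ` H =
      diag_scale k d ` (gammap k gs :: _ \<Rightarrow> 'q mod_ring vec) ` H"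
proof -
  show "(\<lambda>h. conjp h b) ` H \<subseteq> (prod_pows k gs ` (carrier_vec k :: 'q mod_ring vec set))"
  proof
    fix x assume "x \<in> (\<lambda>h. conjp h b) ` H"
    then obtain h where "h \<in> H" "x = conjp h b"
      by blast
    then have "x = prod_pows k gs (diag_scale k d (gammap k gs h :: 'q mod_ring vec))"
      using conjp_H_scaling[OF b d] by simp
    then show "x \<in> (prod_pows k gs ` (carrier_vec k :: 'q mod_ring vec set))"
      by (rule image_eqI) simp
  qed
  have "(gammap k gs :: _ \<Rightarrow> 'q mod_ring vec) ` (\<lambda>h. conjp h b) ` H =
      (\<lambda>h. diag_scale k d (gammap k gs h)) ` H"
    unfolding image_image
    by (rule image_cong[OF refl]) (simp add: conjp_H_scaling[OF b d] gammap_prod_pows)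
  then show "(gammap k gs :: _ \<Rightarrow> 'q mod_ring vec) ` (\<lambda>h. conjp h b) ` H =
      diag_scale k d ` (gammap k gs :: _ \<Rightarrow> 'q mod_ring vec) ` H"
    by (simp add: image_image)
qed

lemma conj_K_H_coords:
  assumes "\<kappa> \<in> gen_perm K_gens"
  shows "(\<lambda>h. conjp h (inv_into UNIV \<kappa>)) ` H \<subseteq> (prod_pows k gs ` (carrier_vec k :: 'q mod_ring vec set))"
proof -
  have "(\<lambda>h. conjp h (inv_into UNIV \<kappa>)) ` H \<subseteq> (\<lambda>g. conjp g (inv_into UNIV \<kappa>)) ` (prod_pows k gs ` (carrier_vec k :: 'q mod_ring vec set))"
    by (rule image_mono[OF H_subset_prod_pows])
  then show ?thesis
    using K_conj_prod_pows[OF assms] by blast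
qed

text \<open>\<kappa> \<circ> b normalises H iff H^b = H^(\<kappa>^-1), and gammap is injective on G.\<close>

lemma normaliser_iff_scaled_codes:
  assumes \<kappa>: "\<kappa> \<in> gen_perm K_gens" and b: "b \<in> gen_perm B_gens"
    and d: "\<forall>i<k. conjp (gs i) b = funpow_res (gs i) (d i)"
  shows "\<kappa> \<circ> b \<in> normaliser (Sn n) H \<longleftrightarrow>
    (gammap k gs :: _ \<Rightarrow> 'q mod_ring vec) ` (\<lambda>h. conjp h (inv_into UNIV \<kappa>)) ` H =
      diag_scale k d ` (gammap k gs :: _ \<Rightarrow> 'q mod_ring vec) ` H"
proof -
  have \<kappa>_perm: "\<kappa> permutes {1..n}"
    using K_conj_prod_pows[OF \<kappa>] by blast
  have b_perm: "b permutes {1..n}"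
    using block_normaliser_gen_perm[OF b] by (simp add: block_normaliser_def)
  have "\<kappa> \<circ> b \<in> Sn n"
    unfolding Sn_def using permutes_compose[OF b_perm \<kappa>_perm] by blast
  then have "\<kappa> \<circ> b \<in> normaliser (Sn n) H \<longleftrightarrow> (\<lambda>h. conjp h (\<kappa> \<circ> b)) ` H = H"
    unfolding normaliser_def by blast
  also have "\<dots> \<longleftrightarrow> (\<lambda>h. conjp h b) ` H = (\<lambda>h. conjp h (inv_into UNIV \<kappa>)) ` H"
    by (rule normalises_comp_iff[OF permutes_bij[OF \<kappa>_perm] permutes_bij[OF b_perm]])
  also have "\<dots> \<longleftrightarrow> (gammap k gs :: _ \<Rightarrow> 'q mod_ring vec) ` (\<lambda>h. conjp h b) ` H =
      (gammap k gs :: _ \<Rightarrow> 'q mod_ring vec) ` (\<lambda>h. conjp h (inv_into UNIV \<kappa>)) ` H"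
    by (rule inj_on_image_eq_iff[OF inj_on_gammap conj_B_H_coords(1)[OF b d] conj_K_H_coords[OF \<kappa>],
          symmetric])
  also have "\<dots> \<longleftrightarrow> (gammap k gs :: _ \<Rightarrow> 'q mod_ring vec) ` (\<lambda>h. conjp h (inv_into UNIV \<kappa>)) ` H =
      diag_scale k d ` (gammap k gs :: _ \<Rightarrow> 'q mod_ring vec) ` H"
    unfolding conj_B_H_coords(2)[OF b d] by (rule eq_commute)
  finally show ?thesis .
qed

theorem normaliser_coset_iff_scaling:
  assumes \<kappa>: "\<kappa> \<in> gen_perm K_gens"
  shows "(\<exists>b\<in>gen_perm B_gens. \<kappa> \<circ> b \<in> normaliser (Sn n) H) \<longleftrightarrow>
    (\<exists>d. (\<forall>i<k. d i \<noteq> 0) \<and>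
      (gammap k gs :: _ \<Rightarrow> 'q mod_ring vec) ` (\<lambda>h. conjp h (inv_into UNIV \<kappa>)) ` H =
      diag_scale k d ` (gammap k gs :: _ \<Rightarrow> 'q mod_ring vec) ` H)"
proof
  assume "\<exists>b\<in>gen_perm B_gens. \<kappa> \<circ> b \<in> normaliser (Sn n) H"
  then obtain b where b: "b \<in> gen_perm B_gens" and nb: "\<kappa> \<circ> b \<in> normaliser (Sn n) H"
    by blast
  have "\<forall>i\<in>{..<k}. \<exists>c :: 'q mod_ring. c \<noteq> 0 \<and> conjp (gs i) b = funpow_res (gs i) c"
    using block_normaliser_scalar block_normaliser_gen_perm[OF b] by blast
  from bchoice[OF this] obtain d :: "nat \<Rightarrow> 'q mod_ring"
    where d: "\<forall>i\<in>{..<k}. d i \<noteq> 0 \<and> conjp (gs i) b = funpow_res (gs i) (d i)"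
    by blast
  then have "\<forall>i<k. conjp (gs i) b = funpow_res (gs i) (d i)"
    by simp
  then have "(gammap k gs :: _ \<Rightarrow> 'q mod_ring vec) ` (\<lambda>h. conjp h (inv_into UNIV \<kappa>)) ` H =
      diag_scale k d ` (gammap k gs :: _ \<Rightarrow> 'q mod_ring vec) ` H"
    using normaliser_iff_scaled_codes[OF \<kappa> b] nb by blast
  then show "\<exists>d. (\<forall>i<k. d i \<noteq> 0) \<and>
      (gammap k gs :: _ \<Rightarrow> 'q mod_ring vec) ` (\<lambda>h. conjp h (inv_into UNIV \<kappa>)) ` H =
      diag_scale k d ` (gammap k gs :: _ \<Rightarrow> 'q mod_ring vec) ` H"
    using d by (intro exI[of _ d]) simp
next
  assume "\<exists>d. (\<forall>i<k. d i \<noteq> 0) \<and>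
      (gammap k gs :: _ \<Rightarrow> 'q mod_ring vec) ` (\<lambda>h. conjp h (inv_into UNIV \<kappa>)) ` H =
      diag_scale k d ` (gammap k gs :: _ \<Rightarrow> 'q mod_ring vec) ` H"
  then obtain d :: "nat \<Rightarrow> 'q mod_ring" where d: "\<forall>i<k. d i \<noteq> 0"
    and V: "(gammap k gs :: _ \<Rightarrow> 'q mod_ring vec) ` (\<lambda>h. conjp h (inv_into UNIV \<kappa>)) ` H =
      diag_scale k d ` (gammap k gs :: _ \<Rightarrow> 'q mod_ring vec) ` H"
    by blast
  obtain b where b: "b \<in> gen_perm B_gens" and bd: "\<forall>i<k. conjp (gs i) b = funpow_res (gs i) (d i)"
    using B_realises_scaling[OF d] by blast
  have "\<kappa> \<circ> b \<in> normaliser (Sn n) H"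
    using normaliser_iff_scaled_codes[OF \<kappa> b bd] V by blast
  then show "\<exists>b\<in>gen_perm B_gens. \<kappa> \<circ> b \<in> normaliser (Sn n) H"
    using b by blast
qed

end

end

theorem lemma4p3:
  fixes n k s :: nat
    and Om :: "nat \<Rightarrow> nat set"           \<comment> \<open>Om i = Omega_(i+1), i < k\<close>
    and H :: "(nat \<Rightarrow> nat) set"
    and \<phi> :: "nat \<Rightarrow> nat \<Rightarrow> nat"          \<comment> \<open>\<phi> j = phi_(j+1), 1 \<le> j < k\<close>
    and g1 :: "nat \<Rightarrow> nat"
    and \<kappa> :: "nat \<Rightarrow> nat"
    and M M' :: "'p::prime_card mod_ring mat"
  defines "p \<equiv> CARD('p)"
    and "gs \<equiv> (\<lambda>j. if j = 0 then g1 else conjp g1 (ovl (Om 0) (Om j) (\<phi> j)))"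
    and "B \<equiv> gen_perm (\<Union>i<k. {\<sigma>. \<sigma> permutes Om i \<and> (\<lambda>g. conjp g \<sigma>) ` (restr (Om i) ` H) = restr (Om i) ` H})"
    and "K \<equiv> gen_perm {ovl (Om 0) (Om j) (\<phi> j) | j. 1 \<le> j \<and> j < k}"
  assumes n_def: "n = p * k" and k_pos: "0 < k"
    and H_sub: "is_perm_subgroup H (Sn n)"
    and orb_cover: "(\<Union>i<k. Om i) = {1..n}"
    and orb_disj: "\<forall>i<k. \<forall>j<k. i \<noteq> j \<longrightarrow> Om i \<inter> Om j = {}"
    and orb_card: "\<forall>i<k. card (Om i) = p"
    and orbits: "\<forall>i<k. \<forall>x\<in>Om i. {h x | h. h \<in> H} = Om i"
    and cyc: "\<forall>i<k. cyclic_of_order (restr (Om i) ` H) p"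
    and phi: "\<forall>j. 1 \<le> j \<and> j < k \<longrightarrow> perm_iso_witness (Om 0) (Om j) (restr (Om 0) ` H) (restr (Om j) ` H) (\<phi> j)"
    and g1_gen: "restr (Om 0) ` H = range (\<lambda>m. g1 ^^ m)"
    and H_card: "card H = p ^ s"
    and kappa: "\<kappa> \<in> K"
    and M_gen: "generator_matrix M s k ((gammap k gs :: (nat \<Rightarrow> nat) \<Rightarrow> 'p mod_ring vec) ` H)"
    and M'_gen: "generator_matrix M' s k ((gammap k gs :: (nat \<Rightarrow> nat) \<Rightarrow> 'p mod_ring vec) ` ((\<lambda>h. conjp h (inv_into UNIV \<kappa>)) ` H))"
  shows "(\<exists>b\<in>B. \<kappa> \<circ> b \<in> normaliser (Sn n) H) \<longleftrightarrow>
         (\<exists>f \<in> GLmat s \<times> Dmat k. Fact s M f = M')"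
proof -
  interpret I: cyclic_orbits n k p Om H \<phi> g1
    by unfold_locales
      (use k_pos H_sub orb_cover orb_disj orb_card orbits cyc phi g1_gen in \<open>simp_all add: p_def\<close>)
  have gs_eq: "I.gs = gs"
    by (rule ext) (simp add: gs_def I.gs_def I.ovphi_def)
  have B_eq: "B = gen_perm I.B_gens"
    by (simp add: B_def I.B_gens_def I.G_def)
  have "\<kappa> \<in> gen_perm I.K_gens"
    using kappa by (simp add: K_def I.K_gens_def I.ovphi_def)
  then have group: "(\<exists>b\<in>gen_perm I.B_gens. \<kappa> \<circ> b \<in> normaliser (Sn n) H) \<longleftrightarrow>
      (\<exists>d. (\<forall>i<k. d i \<noteq> 0) \<and>
        (gammap k gs :: _ \<Rightarrow> 'p mod_ring vec) ` (\<lambda>h. conjp h (inv_into UNIV \<kappa>)) ` H =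
        diag_scale k d ` (gammap k gs :: _ \<Rightarrow> 'p mod_ring vec) ` H)"
    using I.normaliser_coset_iff_scaling[of \<kappa>] unfolding gs_eq p_def by blast
  have code: "(\<exists>f \<in> GLmat s \<times> Dmat k. Fact s M f = M') \<longleftrightarrow>
      (\<exists>d. (\<forall>i<k. d i \<noteq> 0) \<and>
        (gammap k gs :: _ \<Rightarrow> 'p mod_ring vec) ` (\<lambda>h. conjp h (inv_into UNIV \<kappa>)) ` H =
        diag_scale k d ` (gammap k gs :: _ \<Rightarrow> 'p mod_ring vec) ` H)"
    by (rule Fact_eq_iff_diag_scaled[OF M_gen M'_gen])
  show ?thesis
    unfolding B_eq group code ..
qed

end
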